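(* Let $f^\circ=\mathbb 1_{[0,1)}$, $R>0$, $n\in\mathbb N$, $\alpha\in(0,1)$, $\delta\in(0,1]$, and let $\mathcal A$ be a set of strictly positive, non-increasing sequences bounded by $1$. Suppose there are $N\in\mathbb N$ and $a^1,\dots,a^N\in\mathcal A$ such that, writing $k^m:=k_{a^m}(\delta n)$ and $\rho^m:=\rho_{a^m}(\delta n)$ for $m\in[N]$: (C1) $k^m\le k^l$ and $\rho^m\le\delta\rho^l$ whenever $m<l$, $l,m\in[N]$; (C2) there is a finite constant $c_\alpha>0$ with $\exp(c_\alpha\delta^{-2})\le N\alpha^2$; (C3) there is a finite constant $L>0$ with $2\max_{m\in[N]}\sum_{j\in\mathbb N}(a^m_j)^2\le L$; (C4) there is $\eta\in(0,1]$ with $\eta\le\min_{m\in[N]}\frac{(a^m_{k^m})^2\wedge(\delta n)^{-1}\nu_{k^m}^2}{(a^m_{k^m})^2\vee(\delta n)^{-1}\nu_{k^m}^2}$. Let $\underline A_\alpha^2:=\eta\big(R^2\wedge\sqrt{\log(1+\alpha^2)}\wedge L^{-1}\wedge\sqrt{c_\alpha}\big)$. Then for all $A\in[0,\underline A_\alpha]$, $$\inf_\Delta\sup_{a\in\mathcal A}\mathcal R\big(\Delta\mid\mathcal E_a^R,A\rho_a(\delta n)\big)\ge1-\alpha,$$ where the infimum is over all tests $\Delta$.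
   Context: Identify the circle with $[0,1)$. $L^2:=L^2([0,1))$ is the space of square-integrable complex-valued functions on $[0,1)$ with $\langle h_1,h_2\rangle=\int_0^1h_1\overline{h_2}$ and norm $\|\cdot\|_{L^2}$. $e_j(x):=\exp(-\mathrm i2\pi jx)$, $h_j:=\langle h,e_j\rangle$ for $j\in\mathbb Z$. $\mathcal D$ is the set of real-valued probability densities on $[0,1)$ in $L^2$. Circular convolution $(f\circledast\varphi)(y)=\int_0^1f(y-s-\lfloor y-s\rfloor)\varphi(s)ds$. The error density $\varphi\in\mathcal D$ is fixed with $|\varphi_j|>0$ for all $j\in\mathbb Z$. For $f\in\mathcal D$, $Y_1,\dots,Y_n$ are i.i.d. with density $f\circledast\varphi$, joint law $\mathbb P_f$; a test is a measurable $\{0,1\}$-valued function of $(Y_1,\dots,Y_n)$. $[k]:=\{1,\dots,k\}$, $\nu_k:=(\sum_{j\in\mathbb Z:|j|\in[k]}|\varphi_j|^{-4})^{1/4}$. For a sequence $a$ and $x>0$: $\rho_a(x):=\big(\min_{k\in\mathbb N}(a_k^2\vee\nu_k^2/x)\big)^{1/2}$ and $k_a(x):=\min\{k\in\mathbb N:a_k^2\vee\nu_k^2/x=\rho_a(x)^2\}$. $\mathcal E_a^R:=\{h\in L^2:2\sum_{j\in\mathbb N}a_j^{-2}|h_j|^2\le R^2\}$. Risk: $\mathcal R(\Delta\mid\mathcal E,\rho):=\mathbb P_{f^\circ}(\Delta=1)+\sup\{\mathbb P_f(\Delta=0):f\in\mathcal D,f-f^\circ\in\mathcal E,\|f-f^\circ\|_{L^2}\ge\rho\}$.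 *)

theory Defs
  imports "HOL-Probability.Probability"
begin

text \<open>The circle is identified with [0,1); Lebesgue (Borel) measure on [0,1).\<close>
definition M0 :: "real measure" where
  "M0 = restrict_space lborel {0..<1}"

definition ebase :: "int \<Rightarrow> real \<Rightarrow> complex" where
  "ebase j x = exp (- (\<i> * of_real (2 * pi * of_int j * x)))"

definition fc :: "(real \<Rightarrow> complex) \<Rightarrow> int \<Rightarrow> complex" where
  "fc h j = integral\<^sup>L M0 (\<lambda>x. h x * cnj (ebase j x))"

definition L2 :: "(real \<Rightarrow> complex) set" where
  "L2 = {h. h \<in> borel_measurable M0 \<and> integrable M0 (\<lambda>x. (cmod (h x))\<^sup>2)}"

definition l2norm :: "(real \<Rightarrow> complex) \<Rightarrow> real" where
  "l2norm h = sqrt (integral\<^sup>L M0 (\<lambda>x. (cmod (h x))\<^sup>2))"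

definition Dens :: "(real \<Rightarrow> real) set" where
  "Dens = {f. f \<in> borel_measurable M0 \<and> (\<forall>x\<in>{0..<1}. 0 \<le> f x) \<and>
              integrable M0 f \<and> integral\<^sup>L M0 f = 1 \<and>
              (\<lambda>x. complex_of_real (f x)) \<in> L2}"

definition cconv :: "(real \<Rightarrow> real) \<Rightarrow> (real \<Rightarrow> real) \<Rightarrow> real \<Rightarrow> real" where
  "cconv f \<phi> y = integral\<^sup>L M0 (\<lambda>s. f (y - s - of_int \<lfloor>y - s\<rfloor>) * \<phi> s)"

definition Pf :: "(real \<Rightarrow> real) \<Rightarrow> nat \<Rightarrow> (real \<Rightarrow> real) \<Rightarrow> (nat \<Rightarrow> real) measure" where
  "Pf \<phi> n f = PiM {0..<n} (\<lambda>_. density M0 (\<lambda>y. ennreal (cconv f \<phi> y)))"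

definition tests :: "nat \<Rightarrow> ((nat \<Rightarrow> real) \<Rightarrow> nat) set" where
  "tests n = {\<Delta>. \<Delta> \<in> measurable (PiM {0..<n} (\<lambda>_. M0)) (count_space UNIV) \<and>
                  (\<forall>y. \<Delta> y \<in> {0, 1})}"

definition nu :: "(real \<Rightarrow> real) \<Rightarrow> nat \<Rightarrow> real" where
  "nu \<phi> k = (\<Sum>j\<in>{j::int. 1 \<le> \<bar>j\<bar> \<and> \<bar>j\<bar> \<le> int k}.
               (cmod (fc (\<lambda>x. complex_of_real (\<phi> x)) j)) powr (-4)) powr (1/4)"

definition rho :: "(real \<Rightarrow> real) \<Rightarrow> (nat \<Rightarrow> real) \<Rightarrow> real \<Rightarrow> real" where
  "rho \<phi> a x = sqrt (INF k\<in>{1..}. max ((a k)\<^sup>2) ((nu \<phi> k)\<^sup>2 / x))"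

definition kk :: "(real \<Rightarrow> real) \<Rightarrow> (nat \<Rightarrow> real) \<Rightarrow> real \<Rightarrow> nat" where
  "kk \<phi> a x = (LEAST k. 1 \<le> k \<and> max ((a k)\<^sup>2) ((nu \<phi> k)\<^sup>2 / x) = (rho \<phi> a x)\<^sup>2)"

definition ellipsoid :: "(nat \<Rightarrow> real) \<Rightarrow> real \<Rightarrow> (real \<Rightarrow> complex) set" where
  "ellipsoid a R = {h \<in> L2. \<exists>s. ((\<lambda>j. inverse ((a j)\<^sup>2) * (cmod (fc h (int j)))\<^sup>2) has_sum s) {1..}
                              \<and> 2 * s \<le> R\<^sup>2}"

definition fcirc :: "real \<Rightarrow> real" where
  "fcirc = indicator {0..<1}"

text \<open>Risk; the supremum over an empty family is taken to be 0.\<close>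
definition risk :: "(real \<Rightarrow> real) \<Rightarrow> nat \<Rightarrow> ((nat \<Rightarrow> real) \<Rightarrow> nat) \<Rightarrow> (real \<Rightarrow> complex) set \<Rightarrow> real \<Rightarrow> real" where
  "risk \<phi> n \<Delta> E \<rho> =
     measure (Pf \<phi> n fcirc) {y \<in> space (Pf \<phi> n fcirc). \<Delta> y = 1}
     + Sup (insert 0 {measure (Pf \<phi> n f) {y \<in> space (Pf \<phi> n f). \<Delta> y = 0} | f.
            f \<in> Dens \<and> (\<lambda>x. complex_of_real (f x - fcirc x)) \<in> E \<and>
            l2norm (\<lambda>x. complex_of_real (f x - fcirc x)) \<ge> \<rho>})"

end

theory Submission
  imports Defs
begin

(* The alternatives are sign perturbations of the uniform density: for the rate a^m and a sign
   vector theta, f = 1 + sum over 1 <= |j| <= k^m of theta_|j| zeta_m |phi_j|^-2 e_j, with zeta_m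
   chosen so that ||f - 1|| = A rho^m; the bound on A makes f a density in the ellipsoid.
   By Le Cam's argument, every test errs with total probability at least 1 - alpha against the
   uniform mixture of these alternatives as soon as the chi^2 divergence of the mixture of the
   n-fold products from the uniform product is at most 2 alpha^2.  The chi^2 term is an average of
   (integral g g')^n over pairs of convolved alternatives; (1 + x)^n <= exp (n x) and averaging
   over independent signs leave products of cosh <= exp (t^2/2), hence
   exp (n^2 zeta_m^2 zeta_m'^2 nu_min(k^m,k^m')^4).  By (C1) the off-diagonal terms are at most
   1 + alpha^2, and by (C2) the diagonal ones, which have weight 1/N, add at most alpha^2. *)

lemma space_M0 [simp]: "space M0 = {0..<1}"
  by (simp add: M0_def space_restrict_space)

lemma prob_space_M0: "prob_space M0"
  unfolding M0_def by (rule prob_space_restrict_space) auto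

interpretation M0: prob_space M0
  by (rule prob_space_M0)

lemma borel_measurable_M0I: "f \<in> borel_measurable borel \<Longrightarrow> f \<in> borel_measurable M0"
  unfolding M0_def by (rule measurable_restrict_space1) simp

lemma
  fixes f :: "real \<Rightarrow> 'b::euclidean_space"
  assumes "continuous_on {0..1} f"
  shows integrable_M0_continuous: "integrable M0 f"
    and integral_M0_continuous: "integral\<^sup>L M0 f = integral {0..1} f"
proof -
  have "integrable lborel (\<lambda>x. indicator {0..1} x *\<^sub>R f x)"
    by (rule borel_integrable_compact) (use assms in auto)
  have si: "set_integrable lborel {0..<1} f"
    by (rule set_integrable_subset[of _ "{0..1}"])
      (use \<open>integrable lborel _\<close> in \<open>auto simp: set_integrable_def\<close>)
  then show "integrable M0 f"
    unfolding M0_def by (subst integrable_restrict_space) (auto simp: set_integrable_def)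
  have "integral\<^sup>L M0 f = (LINT x : {0..<1} | lborel. f x)"
    unfolding M0_def set_lebesgue_integral_def by (subst integral_restrict_space) auto
  also have "\<dots> = integral {0..<1} f"
    by (rule set_borel_integral_eq_integral(2)[OF si])
  also have "\<dots> = integral {0..1} f"
  proof -
    have "negligible {1::real}" by simp
    then show ?thesis
      by (intro integral_subset_negligible) (auto intro: negligible_subset[OF \<open>negligible {1::real}\<close>])
  qed
  finally show "integral\<^sup>L M0 f = integral {0..1} f" .
qed

subsection \<open>Characters of the circle and trigonometric polynomials\<close>

definition circ_char :: "int \<Rightarrow> real \<Rightarrow> complex" where
  "circ_char m x = cis (2 * pi * of_int m * x)"

lemma continuous_on_circ_char [continuous_intros]: "continuous_on S (circ_char m)"
  unfolding circ_char_def by (intro continuous_intros)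

lemma borel_measurable_circ_char [measurable]: "circ_char m \<in> borel_measurable borel"
  by (intro borel_measurable_continuous_onI continuous_on_circ_char)

lemma borel_measurable_circ_char_M0 [measurable]: "circ_char m \<in> borel_measurable M0"
  by (rule borel_measurable_M0I) simp

lemma circ_char_mult: "circ_char a x * circ_char b x = circ_char (a + b) x"
  unfolding circ_char_def by (simp add: cis_mult distrib_left distrib_right)

lemma cnj_circ_char: "cnj (circ_char m x) = circ_char (- m) x"
  unfolding circ_char_def by (simp add: cis_cnj)

lemma norm_circ_char [simp]: "cmod (circ_char m x) = 1"
  unfolding circ_char_def by simp

lemma circ_char_diff: "circ_char m (x - y) = circ_char m x * circ_char (- m) y"
  unfolding circ_char_def by (simp add: cis_mult algebra_simps)

lemma circ_char_add_int: "circ_char m (x + of_int z) = circ_char m x"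
proof -
  have "circ_char m (x + of_int z) = circ_char m x * cis (2 * pi * of_int (m * z))"
    unfolding circ_char_def by (simp add: cis_mult algebra_simps)
  also have "cis (2 * pi * of_int (m * z)) = 1"
    by (metis cis_multiple_2pi mult.commute Ints_of_int)
  finally show ?thesis by simp
qed

lemma cnj_ebase: "cnj (ebase j x) = circ_char j x"
proof -
  have "ebase j x = circ_char (- j) x"
    unfolding ebase_def circ_char_def by (simp add: cis_conv_exp algebra_simps)
  then show ?thesis by (simp add: cnj_circ_char)
qed

lemma has_integral_circ_char:
  assumes "m \<noteq> 0"
  shows "(circ_char m has_integral 0) {0..1}"
proof -
  define c where "c = 2 * pi * of_int m"
  have "c \<noteq> 0" using assms by (simp add: c_def)
  define F where "F x = circ_char m x / (\<i> * of_real c)" for x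
  have circ_char_exp: "circ_char m x = exp (\<i> * of_real c * of_real x)" for x
    unfolding circ_char_def c_def by (simp add: cis_conv_exp mult_ac)
  have "((\<lambda>z. exp (\<i> * of_real c * z) / (\<i> * of_real c)) has_field_derivative
          exp (\<i> * of_real c * of_real x)) (at (of_real x))" for x
  proof -
    have "((\<lambda>z. exp (\<i> * of_real c * z) / (\<i> * of_real c)) has_field_derivative
          exp (\<i> * of_real c * of_real x) * (\<i> * of_real c) / (\<i> * of_real c)) (at (of_real x))"
      by (auto intro!: derivative_eq_intros)
    then show ?thesis using \<open>c \<noteq> 0\<close> by simp
  qed
  from has_vector_derivative_real_field[OF this]
  have "(F has_vector_derivative circ_char m x) (at x)" for x
    unfolding F_def circ_char_exp by simp
  then have "(circ_char m has_integral (F 1 - F 0)) {0..1}"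
    by (intro fundamental_theorem_of_calculus) (auto intro: has_vector_derivative_at_within)
  moreover have "F 1 = F 0"
    using circ_char_add_int[of m 0 1] unfolding F_def by simp
  ultimately show ?thesis by simp
qed

lemma integrable_circ_char [simp]: "integrable M0 (circ_char m)"
  by (rule integrable_M0_continuous) (intro continuous_intros)

lemma integral_circ_char: "integral\<^sup>L M0 (circ_char m) = (if m = 0 then 1 else 0)"
proof (cases "m = 0")
  case True
  then have "circ_char m = (\<lambda>_. 1)"
    by (auto simp: circ_char_def)
  then show ?thesis using True M0.prob_space by simp
next
  case False
  have "integral\<^sup>L M0 (circ_char m) = integral {0..1} (circ_char m)"
    by (rule integral_M0_continuous) (intro continuous_intros)
  with has_integral_circ_char[OF False] False show ?thesis
    by (simp add: integral_unique)
qed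

definition freqs :: "nat \<Rightarrow> int set" where
  "freqs k = {j. 1 \<le> \<bar>j\<bar> \<and> \<bar>j\<bar> \<le> int k}"

lemma finite_freqs [simp]: "finite (freqs k)"
  by (rule finite_subset[of _ "{- int k..int k}"]) (auto simp: freqs_def)

lemma zero_notin_freqs [simp]: "0 \<notin> freqs k"
  by (simp add: freqs_def)

lemma uminus_in_freqs_iff [simp]: "- j \<in> freqs k \<longleftrightarrow> j \<in> freqs k"
  by (simp add: freqs_def)

lemma freqs_Int: "freqs k \<inter> freqs k' = freqs (min k k')"
  by (auto simp: freqs_def)

lemma sum_freqs_uminus: "(\<Sum>j\<in>freqs k. f (- j)) = (\<Sum>j\<in>freqs k. f j)"
  by (rule sum.reindex_bij_witness[of _ uminus uminus]) auto

lemma sum_freqs_even: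
  fixes f :: "int \<Rightarrow> 'a::comm_semiring_1"
  assumes even: "\<And>j. f (- j) = f j"
  shows "(\<Sum>j\<in>freqs k. f j) = 2 * (\<Sum>i\<in>{1..k}. f (int i))"
proof -
  have split: "freqs k = int ` {1..k} \<union> (\<lambda>i. - int i) ` {1..k}"
  proof (intro equalityI subsetI)
    fix j assume "j \<in> freqs k"
    then have "j = int (nat \<bar>j\<bar>) \<or> j = - int (nat \<bar>j\<bar>)" "nat \<bar>j\<bar> \<in> {1..k}"
      by (auto simp: freqs_def)
    then show "j \<in> int ` {1..k} \<union> (\<lambda>i. - int i) ` {1..k}"
      by blast
  qed (auto simp: freqs_def)
  have "(\<Sum>j\<in>freqs k. f j) = (\<Sum>j\<in>int ` {1..k}. f j) + (\<Sum>j\<in>(\<lambda>i. - int i) ` {1..k}. f j)"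
    unfolding split by (rule sum.union_disjoint) auto
  also have "\<dots> = (\<Sum>i\<in>{1..k}. f (int i)) + (\<Sum>i\<in>{1..k}. f (- int i))"
    by (simp add: sum.reindex inj_on_def)
  finally show ?thesis
    by (simp add: even mult_2)
qed

definition trig_poly :: "(int \<Rightarrow> complex) \<Rightarrow> nat \<Rightarrow> real \<Rightarrow> complex" where
  "trig_poly a k x = (\<Sum>j\<in>freqs k. a j * circ_char j x)"

lemma continuous_on_trig_poly [continuous_intros]: "continuous_on S (trig_poly a k)"
  unfolding trig_poly_def by (intro continuous_intros)

lemma integrable_trig_poly [simp]: "integrable M0 (trig_poly a k)"
  by (rule integrable_M0_continuous) (intro continuous_intros)

lemma trig_poly_add_int: "trig_poly a k (x + of_int z) = trig_poly a k x"
  unfolding trig_poly_def by (simp add: circ_char_add_int)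

lemma norm_trig_poly_le: "cmod (trig_poly a k x) \<le> (\<Sum>j\<in>freqs k. cmod (a j))"
  unfolding trig_poly_def by (rule order.trans[OF norm_sum]) (simp add: norm_mult)

lemma integral_trig_poly: "integral\<^sup>L M0 (trig_poly a k) = 0"
  unfolding trig_poly_def
  by (subst Bochner_Integration.integral_sum)
    (auto simp: integral_circ_char integral_mult_right_zero intro!: sum.neutral)

lemma integral_trig_poly_mult_circ_char:
  "integral\<^sup>L M0 (\<lambda>x. trig_poly a k x * circ_char m x) = (if - m \<in> freqs k then a (- m) else 0)"
proof -
  have "integral\<^sup>L M0 (\<lambda>x. trig_poly a k x * circ_char m x) =
      integral\<^sup>L M0 (\<lambda>x. \<Sum>j\<in>freqs k. a j * circ_char (j + m) x)"
    unfolding trig_poly_def by (simp add: sum_distrib_right mult.assoc circ_char_mult)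
  also have "\<dots> = (\<Sum>j\<in>freqs k. a j * integral\<^sup>L M0 (circ_char (j + m)))"
    by (subst Bochner_Integration.integral_sum) (auto simp: integral_mult_right_zero)
  also have "\<dots> = (\<Sum>j\<in>freqs k. if j = - m then a j else 0)"
    by (intro sum.cong) (auto simp: integral_circ_char)
  finally show ?thesis
    by (simp add: sum.delta')
qed

lemma integral_trig_poly_mult_cnj:
  "integral\<^sup>L M0 (\<lambda>x. trig_poly a k x * cnj (trig_poly b k' x)) =
    (\<Sum>j\<in>freqs (min k k'). a j * cnj (b j))"
proof -
  have "integral\<^sup>L M0 (\<lambda>x. trig_poly a k x * cnj (trig_poly b k' x)) =
      integral\<^sup>L M0 (\<lambda>x. \<Sum>j\<in>freqs k'. cnj (b j) * (trig_poly a k x * circ_char (- j) x))"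
    unfolding trig_poly_def[of b] by (simp add: sum_distrib_left cnj_circ_char mult_ac)
  also have "\<dots> = (\<Sum>j\<in>freqs k'. cnj (b j) * integral\<^sup>L M0 (\<lambda>x. trig_poly a k x * circ_char (- j) x))"
    by (subst Bochner_Integration.integral_sum)
      (auto simp: integral_mult_right_zero intro!: integrable_M0_continuous continuous_intros)
  also have "\<dots> = (\<Sum>j\<in>freqs k'. if j \<in> freqs k then cnj (b j) * a j else 0)"
    by (intro sum.cong) (auto simp: integral_trig_poly_mult_circ_char)
  also have "\<dots> = (\<Sum>j\<in>freqs k' \<inter> freqs k. a j * cnj (b j))"
    by (simp add: sum.inter_restrict mult.commute cong: if_cong)
  finally show ?thesis
    by (simp add: freqs_Int min.commute)
qed

lemma trig_poly_real:
  assumes "\<And>j. a (- j) = cnj (a j)"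
  shows "trig_poly a k x = of_real (Re (trig_poly a k x))"
proof -
  have "cnj (trig_poly a k x) = (\<Sum>j\<in>freqs k. a (- j) * circ_char (- j) x)"
    unfolding trig_poly_def by (simp add: assms cnj_circ_char)
  also have "\<dots> = trig_poly a k x"
    unfolding trig_poly_def by (rule sum_freqs_uminus)
  finally have "trig_poly a k x \<in> \<real>"
    using Reals_cnj_iff by blast
  then show ?thesis
    by (simp add: complex_is_Real_iff)
qed

lemma integral_one_plus_Re_trig_poly_mult:
  assumes "\<And>j. b (- j) = cnj (b j)" and "\<And>j. b' (- j) = cnj (b' j)"
  shows "integral\<^sup>L M0 (\<lambda>x. (1 + Re (trig_poly b k x)) * (1 + Re (trig_poly b' k' x))) =
    1 + Re (\<Sum>j\<in>freqs (min k k'). b j * cnj (b' j))"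
proof -
  have r: "complex_of_real (Re (trig_poly b k x)) = trig_poly b k x" for x
    using trig_poly_real[of b, OF assms(1)] by simp
  have r': "complex_of_real (Re (trig_poly b' k' x)) = cnj (trig_poly b' k' x)" for x
    using trig_poly_real[of b', OF assms(2), of k' x] by (metis complex_cnj_complex_of_real)
  have int: "integrable M0 (\<lambda>x. trig_poly b k x * cnj (trig_poly b' k' x))"
    "integrable M0 (\<lambda>x. cnj (trig_poly b' k' x))"
    by (intro integrable_M0_continuous continuous_intros)+
  have "complex_of_real (integral\<^sup>L M0 (\<lambda>x. (1 + Re (trig_poly b k x)) * (1 + Re (trig_poly b' k' x)))) =
      integral\<^sup>L M0 (\<lambda>x. 1 + trig_poly b k x + cnj (trig_poly b' k' x) +
        trig_poly b k x * cnj (trig_poly b' k' x))"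
    unfolding integral_complex_of_real[symmetric]
    by (intro Bochner_Integration.integral_cong refl)
      (simp add: r r' algebra_simps del: complex_cnj_complex_of_real)
  also have "\<dots> = integral\<^sup>L M0 (\<lambda>x. 1) + integral\<^sup>L M0 (trig_poly b k) +
      integral\<^sup>L M0 (\<lambda>x. cnj (trig_poly b' k' x)) +
      integral\<^sup>L M0 (\<lambda>x. trig_poly b k x * cnj (trig_poly b' k' x))"
    using int by (subst Bochner_Integration.integral_add, auto)+
  also have "\<dots> = 1 + (\<Sum>j\<in>freqs (min k k'). b j * cnj (b' j))"
    using M0.prob_space by (simp add: integral_trig_poly integral_trig_poly_mult_cnj measure_def)
  finally show ?thesis
    by (metis Re_complex_of_real plus_complex.sel(1) one_complex.sel(1))
qed

lemma fc_of_real: "fc (\<lambda>x. complex_of_real (\<phi> x)) j = integral\<^sup>L M0 (\<lambda>x. of_real (\<phi> x) * circ_char j x)"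
  unfolding fc_def by (simp add: cnj_ebase)

lemma fc_of_real_uminus:
  "fc (\<lambda>x. complex_of_real (\<phi> x)) (- j) = cnj (fc (\<lambda>x. complex_of_real (\<phi> x)) j)"
  unfolding fc_of_real by (subst Bochner_Integration.integral_cnj[symmetric]) (simp add: cnj_circ_char)

lemma integrable_Dens_mult_circ_char:
  assumes "\<phi> \<in> Dens"
  shows "integrable M0 (\<lambda>x. of_real (\<phi> x) * circ_char m x)"
proof -
  have m: "\<phi> \<in> borel_measurable M0" "integrable M0 \<phi>"
    using assms by (auto simp: Dens_def)
  have "integrable M0 (\<lambda>x. complex_of_real (\<phi> x))"
    using m(2) by simp
  then show ?thesis
    by (rule Bochner_Integration.integrable_bound) (use m in \<open>auto simp: norm_mult\<close>)
qed

lemma norm_fc_Dens_le_1: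
  assumes "\<phi> \<in> Dens"
  shows "cmod (fc (\<lambda>x. complex_of_real (\<phi> x)) j) \<le> 1"
proof -
  have "cmod (fc (\<lambda>x. complex_of_real (\<phi> x)) j) \<le> integral\<^sup>L M0 (\<lambda>x. norm (of_real (\<phi> x) * circ_char j x))"
    unfolding fc_of_real by (rule integral_norm_bound)
  also have "\<dots> = integral\<^sup>L M0 \<phi>"
    using assms by (intro Bochner_Integration.integral_cong) (auto simp: Dens_def norm_mult)
  finally show ?thesis
    using assms by (simp add: Dens_def)
qed

lemma frac_diff_in_unit: "(y::real) - s - of_int \<lfloor>y - s\<rfloor> \<in> {0..<1}"
  by (auto simp: floor_le_iff) linarith

lemma cconv_fcirc:
  assumes "\<phi> \<in> Dens"
  shows "cconv fcirc \<phi> y = 1"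
proof -
  have "cconv fcirc \<phi> y = integral\<^sup>L M0 \<phi>"
    unfolding cconv_def fcirc_def
    by (intro Bochner_Integration.integral_cong) (use frac_diff_in_unit[of y] in auto)
  then show ?thesis
    using assms by (simp add: Dens_def)
qed

lemma cconv_one_plus_trig_poly:
  assumes phi: "\<phi> \<in> Dens"
    and herm: "\<And>j. a (- j) = cnj (a j)"
    and f: "\<And>x. f x = 1 + Re (trig_poly a k x)"
  shows "complex_of_real (cconv f \<phi> y) =
    1 + trig_poly (\<lambda>j. a j * fc (\<lambda>x. complex_of_real (\<phi> x)) (- j)) k y"
proof -
  have m: "integrable M0 \<phi>" "integral\<^sup>L M0 \<phi> = 1"
    using phi by (auto simp: Dens_def)
  have f_eq: "f z = 1 + trig_poly a k z" for z
    using trig_poly_real[of a, OF herm, of k z] by (simp add: f)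
  have "complex_of_real (cconv f \<phi> y) =
      integral\<^sup>L M0 (\<lambda>s. complex_of_real (f (y - s - of_int \<lfloor>y - s\<rfloor>)) * of_real (\<phi> s))"
    unfolding cconv_def integral_complex_of_real[symmetric] by simp
  also have "\<dots> = integral\<^sup>L M0 (\<lambda>s. of_real (\<phi> s) +
      (\<Sum>j\<in>freqs k. (a j * circ_char j y) * (of_real (\<phi> s) * circ_char (- j) s)))"
  proof (intro Bochner_Integration.integral_cong refl)
    fix s
    have "complex_of_real (f (y - s - of_int \<lfloor>y - s\<rfloor>)) = 1 + trig_poly a k (y - s)"
      using trig_poly_add_int[of a k "y - s" "- \<lfloor>y - s\<rfloor>"] by (simp add: f_eq)
    also have "trig_poly a k (y - s) = (\<Sum>j\<in>freqs k. a j * circ_char j y * circ_char (- j) s)"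
      unfolding trig_poly_def by (simp add: circ_char_diff mult.assoc)
    finally show "complex_of_real (f (y - s - of_int \<lfloor>y - s\<rfloor>)) * of_real (\<phi> s) =
        of_real (\<phi> s) + (\<Sum>j\<in>freqs k. (a j * circ_char j y) * (of_real (\<phi> s) * circ_char (- j) s))"
      by (simp add: distrib_left sum_distrib_left mult_ac)
  qed
  also have "\<dots> = integral\<^sup>L M0 (\<lambda>s. complex_of_real (\<phi> s)) +
      (\<Sum>j\<in>freqs k. (a j * circ_char j y) * integral\<^sup>L M0 (\<lambda>s. of_real (\<phi> s) * circ_char (- j) s))"
    using m(1) integrable_Dens_mult_circ_char[OF phi]
    by (simp add: Bochner_Integration.integral_sum integral_mult_right_zero)
  also have "\<dots> = 1 + trig_poly (\<lambda>j. a j * fc (\<lambda>x. complex_of_real (\<phi> x)) (- j)) k y"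
    unfolding trig_poly_def fc_of_real using m(2) by (simp add: mult_ac)
  finally show ?thesis .
qed

lemma frac_diff_measurable [measurable]:
  "(\<lambda>p::real \<times> real. fst p - snd p - of_int \<lfloor>fst p - snd p\<rfloor>) \<in> measurable (M0 \<Otimes>\<^sub>M M0) M0"
proof -
  have [measurable]: "(\<lambda>x::real. x) \<in> borel_measurable M0"
    by (rule borel_measurable_M0I) simp
  have [measurable]: "(\<lambda>p::real\<times>real. fst p) \<in> borel_measurable (M0 \<Otimes>\<^sub>M M0)"
    "(\<lambda>p::real\<times>real. snd p) \<in> borel_measurable (M0 \<Otimes>\<^sub>M M0)"
    by measurable
  have d: "(\<lambda>p::real \<times> real. fst p - snd p) \<in> borel_measurable (M0 \<Otimes>\<^sub>M M0)"
    by measurable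
  have "(\<lambda>p::real \<times> real. fst p - snd p - of_int \<lfloor>fst p - snd p\<rfloor>) \<in> borel_measurable (M0 \<Otimes>\<^sub>M M0)"
    using d measurable_compose[OF d borel_measurable_real_floor] by measurable
  then show ?thesis
    unfolding M0_def by (intro measurable_restrict_space2) (use frac_diff_in_unit in auto)
qed

lemma borel_measurable_cconv_integrand:
  fixes f \<phi> :: "real \<Rightarrow> real"
  assumes [measurable]: "f \<in> borel_measurable M0" "\<phi> \<in> borel_measurable M0"
  shows "(\<lambda>(y, s). f (y - s - of_int \<lfloor>y - s\<rfloor>) * \<phi> s) \<in> borel_measurable (M0 \<Otimes>\<^sub>M M0)"
proof -
  have "(\<lambda>p. f (fst p - snd p - of_int \<lfloor>fst p - snd p\<rfloor>)) \<in> borel_measurable (M0 \<Otimes>\<^sub>M M0)"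
    by (rule measurable_compose[OF frac_diff_measurable]) measurable
  from borel_measurable_times[OF this measurable_compose[OF measurable_snd assms(2)]]
  show ?thesis
    by (simp add: case_prod_beta')
qed

lemma borel_measurable_cconv:
  assumes "f \<in> Dens" and "\<phi> \<in> Dens"
  shows "cconv f \<phi> \<in> borel_measurable M0"
proof -
  have "case_prod (\<lambda>y s. f (y - s - of_int \<lfloor>y - s\<rfloor>) * \<phi> s) \<in> borel_measurable (M0 \<Otimes>\<^sub>M M0)"
    using assms by (intro borel_measurable_cconv_integrand) (auto simp: Dens_def)
  then show ?thesis
    unfolding cconv_def by (rule M0.borel_measurable_lebesgue_integral)
qed

lemma nn_integral_lborel_shift_indicator:
  fixes G :: "real \<Rightarrow> ennreal"
  assumes [measurable]: "G \<in> borel_measurable borel"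
  shows "(\<integral>\<^sup>+ y. G (y - t) * indicator {a..<b} y \<partial>lborel) =
    (\<integral>\<^sup>+ z. G z * indicator {a - t..<b - t} z \<partial>lborel)"
proof -
  have "(\<integral>\<^sup>+ y. G (y - t) * indicator {a..<b} y \<partial>lborel) =
      (\<integral>\<^sup>+ z. G (t + 1 * z - t) * indicator {a..<b} (t + 1 * z) \<partial>lborel)"
    using nn_integral_real_affine[of "\<lambda>y. G (y - t) * indicator {a..<b} y" 1 t] by simp
  also have "\<dots> = (\<integral>\<^sup>+ z. G z * indicator {a - t..<b - t} z \<partial>lborel)"
    by (intro nn_integral_cong) (auto simp: indicator_def)
  finally show ?thesis .
qed

text \<open>Rotation invariance of the uniform measure on the circle: reducing \<open>y - s\<close> modulo 1
  translates \<open>[s, 1)\<close> by \<open>-s\<close> and \<open>[0, s)\<close> by \<open>1 - s\<close>.\<close>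

lemma nn_integral_M0_frac_shift:
  assumes f [measurable]: "f \<in> borel_measurable M0" and s: "s \<in> {0..<1}"
  shows "(\<integral>\<^sup>+ y. ennreal (f (y - s - of_int \<lfloor>y - s\<rfloor>)) \<partial>M0) = (\<integral>\<^sup>+ y. ennreal (f y) \<partial>M0)"
proof -
  define G where "G x = ennreal (f x) * indicator {0..<1} x" for x
  have "(\<lambda>x. ennreal (f x)) \<in> borel_measurable M0"
    by measurable
  then have G [measurable]: "G \<in> borel_measurable borel"
    unfolding G_def M0_def by (subst (asm) borel_measurable_restrict_space_iff_ennreal) auto
  have pieces: "ennreal (f (y - s - of_int \<lfloor>y - s\<rfloor>)) * indicator {0..<1} y =
      G (y - s) * indicator {s..<1} y + G (y - s + 1) * indicator {0..<s} y" for y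
  proof (cases "y \<in> {0..<1}")
    case True
    show ?thesis
    proof (cases "s \<le> y")
      case True
      then have "\<lfloor>y - s\<rfloor> = 0" using \<open>y \<in> {0..<1}\<close> s by (intro floor_unique) auto
      then show ?thesis using True \<open>y \<in> {0..<1}\<close> s by (auto simp: G_def indicator_def)
    next
      case False
      then have "\<lfloor>y - s\<rfloor> = -1" using \<open>y \<in> {0..<1}\<close> s by (intro floor_unique) auto
      then show ?thesis using False \<open>y \<in> {0..<1}\<close> s by (auto simp: G_def indicator_def)
    qed
  qed (use s in \<open>auto simp: G_def indicator_def\<close>)
  have "(\<integral>\<^sup>+ y. ennreal (f (y - s - of_int \<lfloor>y - s\<rfloor>)) \<partial>M0) =
      (\<integral>\<^sup>+ y. ennreal (f (y - s - of_int \<lfloor>y - s\<rfloor>)) * indicator {0..<1} y \<partial>lborel)"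
    unfolding M0_def by (rule nn_integral_restrict_space) auto
  also have "\<dots> = (\<integral>\<^sup>+ y. G (y - s) * indicator {s..<1} y \<partial>lborel) +
      (\<integral>\<^sup>+ y. G (y - s + 1) * indicator {0..<s} y \<partial>lborel)"
    unfolding pieces by (rule nn_integral_add) auto
  also have "\<dots> = (\<integral>\<^sup>+ z. G z * indicator {0..<1 - s} z \<partial>lborel) +
      (\<integral>\<^sup>+ z. G z * indicator {1 - s..<1} z \<partial>lborel)"
    using nn_integral_lborel_shift_indicator[OF G, of s s 1]
      nn_integral_lborel_shift_indicator[OF G, of "s - 1" 0 s]
    by (simp add: algebra_simps)
  also have "\<dots> = (\<integral>\<^sup>+ z. G z * indicator {0..<1 - s} z + G z * indicator {1 - s..<1} z \<partial>lborel)"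
    by (rule nn_integral_add[symmetric]) auto
  also have "\<dots> = (\<integral>\<^sup>+ z. ennreal (f z) * indicator {0..<1} z \<partial>lborel)"
    using s by (intro nn_integral_cong) (auto simp: G_def indicator_def)
  also have "\<dots> = (\<integral>\<^sup>+ y. ennreal (f y) \<partial>M0)"
    unfolding M0_def by (rule nn_integral_restrict_space[symmetric]) auto
  finally show ?thesis .
qed

lemma ennreal_integral_le_nn_integral:
  fixes F :: "'a \<Rightarrow> real"
  assumes "\<And>x. x \<in> space M \<Longrightarrow> 0 \<le> F x"
  shows "ennreal (integral\<^sup>L M F) \<le> (\<integral>\<^sup>+ x. ennreal (F x) \<partial>M)"
proof (cases "integrable M F")
  case True
  then show ?thesis using assms by (subst nn_integral_eq_integral) auto
qed (simp add: not_integrable_integral_eq)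

lemma nn_integral_cconv_le_1:
  assumes f: "f \<in> Dens" and phi: "\<phi> \<in> Dens"
  shows "(\<integral>\<^sup>+ y. ennreal (cconv f \<phi> y) \<partial>M0) \<le> 1"
proof -
  have fm [measurable]: "f \<in> borel_measurable M0" and fi: "integrable M0 f" "integral\<^sup>L M0 f = 1"
    and fp: "\<And>x. x \<in> {0..<1} \<Longrightarrow> 0 \<le> f x" using f by (auto simp: Dens_def)
  have pm [measurable]: "\<phi> \<in> borel_measurable M0" and pi: "integrable M0 \<phi>" "integral\<^sup>L M0 \<phi> = 1"
    and pp: "\<And>x. x \<in> {0..<1} \<Longrightarrow> 0 \<le> \<phi> x" using phi by (auto simp: Dens_def)
  interpret pair_sigma_finite M0 M0
    by (intro pair_sigma_finite.intro prob_space_imp_sigma_finite prob_space_M0)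
  have shift: "(\<integral>\<^sup>+ y. ennreal (f (y - s - of_int \<lfloor>y - s\<rfloor>) * \<phi> s) \<partial>M0) =
      ennreal (\<phi> s) * (\<integral>\<^sup>+ y. ennreal (f y) \<partial>M0)" if s: "s \<in> space M0" for s
  proof -
    have "(\<lambda>y. (y, s)) \<in> measurable M0 (M0 \<Otimes>\<^sub>M M0)"
      using s by (intro measurable_Pair measurable_ident_sets) auto
    from measurable_compose[OF measurable_compose[OF this frac_diff_measurable] fm]
    have [measurable]: "(\<lambda>y. f (y - s - of_int \<lfloor>y - s\<rfloor>)) \<in> borel_measurable M0"
      by simp
    have "(\<integral>\<^sup>+ y. ennreal (f (y - s - of_int \<lfloor>y - s\<rfloor>) * \<phi> s) \<partial>M0) =
        (\<integral>\<^sup>+ y. ennreal (f (y - s - of_int \<lfloor>y - s\<rfloor>)) * ennreal (\<phi> s) \<partial>M0)"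
      using s pp by (intro nn_integral_cong) (simp add: ennreal_mult'')
    also have "\<dots> = (\<integral>\<^sup>+ y. ennreal (f (y - s - of_int \<lfloor>y - s\<rfloor>)) \<partial>M0) * ennreal (\<phi> s)"
      by (rule nn_integral_multc) measurable
    finally show ?thesis
      using nn_integral_M0_frac_shift[OF fm] s by (simp add: mult.commute)
  qed
  have "(\<integral>\<^sup>+ y. ennreal (cconv f \<phi> y) \<partial>M0) \<le>
      (\<integral>\<^sup>+ y. (\<integral>\<^sup>+ s. ennreal (f (y - s - of_int \<lfloor>y - s\<rfloor>) * \<phi> s) \<partial>M0) \<partial>M0)"
    unfolding cconv_def
    by (intro nn_integral_mono ennreal_integral_le_nn_integral)
      (use frac_diff_in_unit fp pp in \<open>auto intro!: mult_nonneg_nonneg\<close>)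
  also have "\<dots> = (\<integral>\<^sup>+ s. (\<integral>\<^sup>+ y. ennreal (f (y - s - of_int \<lfloor>y - s\<rfloor>) * \<phi> s) \<partial>M0) \<partial>M0)"
    using borel_measurable_cconv_integrand[OF fm pm] by (intro Fubini'[symmetric]) measurable
  also have "\<dots> = (\<integral>\<^sup>+ s. ennreal (\<phi> s) * (\<integral>\<^sup>+ y. ennreal (f y) \<partial>M0) \<partial>M0)"
    using shift by (intro nn_integral_cong) simp
  also have "(\<integral>\<^sup>+ y. ennreal (f y) \<partial>M0) = 1"
    using fi fp by (subst nn_integral_eq_integral) auto
  also have "(\<integral>\<^sup>+ s. ennreal (\<phi> s) * 1 \<partial>M0) = 1"
    using pi pp by (simp, subst nn_integral_eq_integral) auto
  finally show ?thesis by simp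
qed

lemma emeasure_density_space_eq_nn_integral:
  "f \<in> borel_measurable M \<Longrightarrow> emeasure (density M f) (space (density M f)) = (\<integral>\<^sup>+ x. f x \<partial>M)"
  by (subst emeasure_density) (auto intro!: nn_integral_cong)

lemma indicator_PiE_eq_prod:
  assumes "finite I" "x \<in> extensional I"
  shows "(indicator (Pi\<^sub>E I A) x :: ennreal) = (\<Prod>i\<in>I. indicator (A i) (x i))"
proof (cases "\<forall>i\<in>I. x i \<in> A i")
  case True
  then have "x \<in> Pi\<^sub>E I A" using assms(2) by (auto simp: PiE_def)
  then show ?thesis using True by simp
next
  case False
  then obtain i where i: "i \<in> I" "x i \<notin> A i" by blast
  then have "x \<notin> Pi\<^sub>E I A" by auto
  moreover have "(\<Prod>i\<in>I. indicator (A i) (x i) :: ennreal) = 0"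
    using i assms(1) by (intro prod_zero) (auto intro!: bexI[of _ i])
  ultimately show ?thesis by simp
qed

lemma PiM_density_eq_density_PiM:
  fixes g :: "'a \<Rightarrow> real"
  assumes M: "sigma_finite_measure M" and I: "finite I" and g [measurable]: "g \<in> borel_measurable M"
    and fin: "(\<integral>\<^sup>+ y. ennreal (g y) \<partial>M) < \<infinity>"
  shows "PiM I (\<lambda>_. density M (\<lambda>y. ennreal (g y))) =
    density (PiM I (\<lambda>_. M)) (\<lambda>x. \<Prod>i\<in>I. ennreal (g (x i)))"
proof -
  let ?D = "density M (\<lambda>y. ennreal (g y))"
  have "finite_measure ?D"
    by (rule finite_measureI) (use fin emeasure_density_space_eq_nn_integral[of "\<lambda>y. ennreal (g y)" M] in simp)
  then interpret D: product_sigma_finite "\<lambda>_. ?D"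
    unfolding product_sigma_finite_def by (simp add: finite_measure.sigma_finite_measure)
  interpret M: product_sigma_finite "\<lambda>_. M"
    unfolding product_sigma_finite_def using M by simp
  show ?thesis
  proof (rule D.PiM_eqI[OF I, symmetric])
    show "sets (density (Pi\<^sub>M I (\<lambda>_. M)) (\<lambda>x. \<Prod>i\<in>I. ennreal (g (x i)))) = sets (Pi\<^sub>M I (\<lambda>_. ?D))"
      using sets_PiM_cong[of I I "\<lambda>_. ?D" "\<lambda>_. M"] by simp
  next
    fix A assume "\<And>i. i \<in> I \<Longrightarrow> A i \<in> sets ?D"
    then have A: "\<And>i. i \<in> I \<Longrightarrow> A i \<in> sets M" by simp
    have "Pi\<^sub>E I A \<in> sets (Pi\<^sub>M I (\<lambda>_. M))"
      using A by (intro sets_PiM_I_finite I) auto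
    then have "emeasure (density (Pi\<^sub>M I (\<lambda>_. M)) (\<lambda>x. \<Prod>i\<in>I. ennreal (g (x i)))) (Pi\<^sub>E I A) =
        (\<integral>\<^sup>+ x. (\<Prod>i\<in>I. ennreal (g (x i))) * indicator (Pi\<^sub>E I A) x \<partial>Pi\<^sub>M I (\<lambda>_. M))"
      by (subst emeasure_density) (auto intro!: borel_measurable_prod_ennreal)
    also have "\<dots> = (\<integral>\<^sup>+ x. (\<Prod>i\<in>I. ennreal (g (x i)) * indicator (A i) (x i)) \<partial>Pi\<^sub>M I (\<lambda>_. M))"
    proof (intro nn_integral_cong)
      fix x assume "x \<in> space (Pi\<^sub>M I (\<lambda>_. M))"
      then have "x \<in> extensional I" by (simp add: space_PiM PiE_def)
      then show "(\<Prod>i\<in>I. ennreal (g (x i))) * indicator (Pi\<^sub>E I A) x =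
          (\<Prod>i\<in>I. ennreal (g (x i)) * indicator (A i) (x i))"
        by (simp add: indicator_PiE_eq_prod[OF I] prod.distrib)
    qed
    also have "\<dots> = (\<Prod>i\<in>I. \<integral>\<^sup>+ y. ennreal (g y) * indicator (A i) y \<partial>M)"
      using A by (intro M.product_nn_integral_prod I) auto
    also have "\<dots> = (\<Prod>i\<in>I. emeasure ?D (A i))"
      using A by (intro prod.cong refl) (simp add: emeasure_density)
    finally show "emeasure (density (Pi\<^sub>M I (\<lambda>_. M)) (\<lambda>x. \<Prod>i\<in>I. ennreal (g (x i)))) (Pi\<^sub>E I A) =
      (\<Prod>i\<in>I. emeasure ?D (A i))" .
  qed
qed

lemma measure_PiM_density_le_1:
  fixes g :: "'a \<Rightarrow> real"
  assumes I: "finite I" and g [measurable]: "g \<in> borel_measurable M"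
    and mass: "(\<integral>\<^sup>+ y. ennreal (g y) \<partial>M) \<le> 1"
  shows "measure (PiM I (\<lambda>_. density M (\<lambda>y. ennreal (g y)))) X \<le> 1"
proof -
  let ?D = "density M (\<lambda>y. ennreal (g y))"
  have D_space: "emeasure ?D (space ?D) \<le> 1"
    using mass emeasure_density_space_eq_nn_integral[of "\<lambda>y. ennreal (g y)" M] by simp
  then have "finite_measure ?D"
    by (intro finite_measureI) (auto simp: top_unique)
  then interpret D: product_sigma_finite "\<lambda>_. ?D"
    unfolding product_sigma_finite_def by (simp add: finite_measure.sigma_finite_measure)
  have "emeasure (PiM I (\<lambda>_. ?D)) (space (PiM I (\<lambda>_. ?D))) = (\<Prod>i\<in>I. emeasure ?D (space ?D))"
    using D.emeasure_PiM[OF I, of "\<lambda>_. space ?D"] by (simp add: space_PiM)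
  also have "\<dots> \<le> 1"
    using prod_mono_ennreal[of I "\<lambda>_. emeasure ?D (space ?D)" "\<lambda>_. 1"] D_space by simp
  finally have "emeasure (PiM I (\<lambda>_. ?D)) X \<le> 1"
    by (meson emeasure_space order.trans)
  then show ?thesis
    unfolding measure_def using enn2real_mono[of _ 1] by fastforce
qed

lemma Pf_fcirc:
  assumes "\<phi> \<in> Dens"
  shows "Pf \<phi> n fcirc = PiM {0..<n} (\<lambda>_. M0)"
  unfolding Pf_def using cconv_fcirc[OF assms] by (simp add: density_1)

lemma measure_Pf_le_1:
  assumes "f \<in> Dens" and "\<phi> \<in> Dens"
  shows "measure (Pf \<phi> n f) X \<le> 1"
  unfolding Pf_def
  by (rule measure_PiM_density_le_1[OF _ borel_measurable_cconv nn_integral_cconv_le_1])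
    (use assms in auto)

lemma risk_le_2:
  assumes "\<phi> \<in> Dens"
  shows "risk \<phi> n \<Delta> E r \<le> 2"
proof -
  interpret P: prob_space "PiM {0..<n} (\<lambda>_. M0)"
    by (intro prob_space_PiM prob_space_M0)
  have "measure (Pf \<phi> n fcirc) {y \<in> space (Pf \<phi> n fcirc). \<Delta> y = 1} \<le> 1"
    unfolding Pf_fcirc[OF assms] by simp
  moreover have "Sup (insert 0 {measure (Pf \<phi> n f) {y \<in> space (Pf \<phi> n f). \<Delta> y = 0} | f.
      f \<in> Dens \<and> (\<lambda>x. complex_of_real (f x - fcirc x)) \<in> E \<and>
      l2norm (\<lambda>x. complex_of_real (f x - fcirc x)) \<ge> r}) \<le> 1"
    by (rule cSup_least) (auto intro: measure_Pf_le_1[OF _ assms])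
  ultimately show ?thesis
    unfolding risk_def by simp
qed

lemma risk_ge_errors:
  assumes phi: "\<phi> \<in> Dens" and f: "f \<in> Dens"
    and E: "(\<lambda>x. complex_of_real (f x - fcirc x)) \<in> E"
    and r: "r \<le> l2norm (\<lambda>x. complex_of_real (f x - fcirc x))"
  shows "measure (Pf \<phi> n fcirc) {y \<in> space (Pf \<phi> n fcirc). \<Delta> y = 1} +
    measure (Pf \<phi> n f) {y \<in> space (Pf \<phi> n f). \<Delta> y = 0} \<le> risk \<phi> n \<Delta> E r"
proof -
  let ?S = "{measure (Pf \<phi> n f) {y \<in> space (Pf \<phi> n f). \<Delta> y = 0} | f.
    f \<in> Dens \<and> (\<lambda>x. complex_of_real (f x - fcirc x)) \<in> E \<and>
    l2norm (\<lambda>x. complex_of_real (f x - fcirc x)) \<ge> r}"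
  have "measure (Pf \<phi> n f) {y \<in> space (Pf \<phi> n f). \<Delta> y = 0} \<le> Sup (insert 0 ?S)"
  proof (rule cSup_upper)
    show "measure (Pf \<phi> n f) {y \<in> space (Pf \<phi> n f). \<Delta> y = 0} \<in> insert 0 ?S"
      using f E r by blast
    show "bdd_above (insert 0 ?S)"
      by (rule bdd_aboveI[where M=1]) (auto intro: measure_Pf_le_1[OF _ phi])
  qed
  then show ?thesis
    unfolding risk_def by simp
qed

subsection \<open>Le Cam's bound for a mixture of alternatives\<close>

text \<open>If \<open>L\<close> is the likelihood ratio of the mixture against \<open>M\<close>, the sum of the two error
  probabilities of the test with rejection region \<open>B\<close> is \<open>1 - cov(1\<^sub>B, L)\<close>; the covariance is
  bounded by weighted AM-GM from the variances \<open>\<le> 1/4\<close> and \<open>\<le> 2\<alpha>\<^sup>2\<close>.\<close>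

lemma (in prob_space) prob_plus_integral_compl_ge:
  fixes L :: "'a \<Rightarrow> real"
  assumes B: "B \<in> events"
    and L: "integrable M L" "integrable M (\<lambda>x. (L x)\<^sup>2)" "expectation L = 1"
    and chi: "expectation (\<lambda>x. (L x)\<^sup>2) \<le> 1 + 2 * \<alpha>\<^sup>2" and \<alpha>: "0 < \<alpha>"
  shows "1 - \<alpha> \<le> prob B + expectation (\<lambda>x. L x * indicator (space M - B) x)"
proof -
  define p where "p = prob B"
  have p: "0 \<le> p" "p \<le> 1" "expectation (indicator B) = p"
    using B by (auto simp: p_def)
  have iB: "integrable M (indicator B :: 'a \<Rightarrow> real)"
    using B by (simp add: integrable_indicator_iff emeasure_eq_measure)
  have iLB: "integrable M (\<lambda>x. L x * indicator B x)"
    using B L(1) by (rule integrable_real_mult_indicator)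
  have sq_B: "(\<lambda>x. (indicator B x - p)\<^sup>2) = (\<lambda>x. (1 - 2 * p) * indicator B x + p\<^sup>2)"
    by (auto simp: indicator_def power2_eq_square algebra_simps)
  have sq_L: "(\<lambda>x. (L x - 1)\<^sup>2) = (\<lambda>x. (L x)\<^sup>2 - 2 * L x + 1)"
    by (auto simp: power2_eq_square algebra_simps)
  have prod: "(\<lambda>x. (indicator B x - p) * (L x - 1)) =
      (\<lambda>x. L x * indicator B x - indicator B x - p * L x + p)"
    by (auto simp: algebra_simps)
  have int_sq: "integrable M (\<lambda>x. (indicator B x - p)\<^sup>2)" "integrable M (\<lambda>x. (L x - 1)\<^sup>2)"
    unfolding sq_B sq_L using iB L by simp_all
  have compl: "expectation (\<lambda>x. L x * indicator (space M - B) x) = 1 - expectation (\<lambda>x. L x * indicator B x)"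
  proof -
    have "expectation (\<lambda>x. L x * indicator (space M - B) x) = expectation (\<lambda>x. L x - L x * indicator B x)"
      by (intro Bochner_Integration.integral_cong) (auto simp: indicator_def)
    then show ?thesis
      using L(1,3) iLB by simp
  qed
  have cov: "expectation (\<lambda>x. (indicator B x - p) * (L x - 1)) = expectation (\<lambda>x. L x * indicator B x) - p"
    unfolding prod using iLB iB L(1,3) p(3) prob_space by simp
  have var_B: "expectation (\<lambda>x. (indicator B x - p)\<^sup>2) \<le> 1 / 4"
  proof -
    have "expectation (\<lambda>x. (indicator B x - p)\<^sup>2) = 1 / 4 - (p - 1 / 2)\<^sup>2"
      unfolding sq_B using iB p(3) prob_space by (simp add: power2_eq_square algebra_simps)
    then show ?thesis by simp
  qed
  have var_L: "expectation (\<lambda>x. (L x - 1)\<^sup>2) \<le> 2 * \<alpha>\<^sup>2"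
    unfolding sq_L using L chi prob_space by simp
  have am_gm: "(indicator B x - p) * (L x - 1) \<le> \<alpha> * (indicator B x - p)\<^sup>2 + (L x - 1)\<^sup>2 / (4 * \<alpha>)" for x
  proof -
    have "0 \<le> (2 * \<alpha> * (indicator B x - p) - (L x - 1))\<^sup>2" by simp
    then show ?thesis
      using \<alpha> by (simp add: field_simps power2_eq_square)
  qed
  have "expectation (\<lambda>x. (indicator B x - p) * (L x - 1)) \<le>
      expectation (\<lambda>x. \<alpha> * (indicator B x - p)\<^sup>2 + (L x - 1)\<^sup>2 / (4 * \<alpha>))"
    by (intro integral_mono am_gm) (use iB iLB L int_sq in \<open>simp_all add: prod\<close>)
  also have "\<dots> = \<alpha> * expectation (\<lambda>x. (indicator B x - p)\<^sup>2) + expectation (\<lambda>x. (L x - 1)\<^sup>2) / (4 * \<alpha>)"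
    using int_sq by simp
  also have "\<dots> \<le> \<alpha> * (1 / 4) + 2 * \<alpha>\<^sup>2 / (4 * \<alpha>)"
    using var_B var_L \<alpha> by (intro add_mono mult_left_mono divide_right_mono) auto
  also have "\<dots> \<le> \<alpha>"
    using \<alpha> by (simp add: power2_eq_square)
  finally show ?thesis
    unfolding compl using cov p_def by linarith
qed

lemma mixture_PiM_test_error_ge:
  fixes M :: "'a measure" and g :: "'q \<Rightarrow> 'a \<Rightarrow> real" and I :: "'i set"
  defines "P \<equiv> PiM I (\<lambda>_. M)"
  assumes M: "prob_space M" and I: "finite I" and Q: "finite Q" "Q \<noteq> {}"
    and g_meas: "\<And>q. q \<in> Q \<Longrightarrow> g q \<in> borel_measurable M"
    and g_bounded: "\<And>q y. q \<in> Q \<Longrightarrow> 0 \<le> g q y \<and> g q y \<le> C"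
    and g_int: "\<And>q. q \<in> Q \<Longrightarrow> integral\<^sup>L M (g q) = 1"
    and B: "B \<in> sets P"
    and chi: "(\<Sum>q\<in>Q. \<Sum>q'\<in>Q. (\<integral>y. g q y * g q' y \<partial>M) ^ card I) \<le> (1 + 2 * \<alpha>\<^sup>2) * (real (card Q))\<^sup>2"
    and \<alpha>: "0 < \<alpha>"
  shows "1 - \<alpha> \<le> measure P B +
    (\<Sum>q\<in>Q. measure (PiM I (\<lambda>_. density M (\<lambda>y. ennreal (g q y)))) (space P - B)) / real (card Q)"
proof -
  interpret P: prob_space P
    unfolding P_def using M by (intro prob_space_PiM)
  interpret M: product_sigma_finite "\<lambda>_. M"
    using M by (simp add: product_sigma_finite_def prob_space_imp_sigma_finite)
  have fin_M: "finite_measure M"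
    using M by (rule prob_space.finite_measure)
  define G where "G q x = (\<Prod>i\<in>I. g q (x i))" for q x
  define c where "c = real (card Q)"
  define L where "L x = (\<Sum>q\<in>Q. G q x) / c" for x
  have c: "c > 0"
    unfolding c_def using Q by (simp add: card_gt_0_iff)
  have g_integrable: "integrable M (g q)" "integrable M (\<lambda>y. g q y * g q' y)"
    if "q \<in> Q" "q' \<in> Q" for q q'
  proof -
    show "integrable M (g q)"
      using g_bounded[OF that(1)] g_meas[OF that(1)]
      by (intro finite_measure.integrable_const_bound[OF fin_M, where B=C]) auto
    have "\<bar>g q y * g q' y\<bar> \<le> C * C" for y
      using g_bounded[OF that(1), of y] g_bounded[OF that(2), of y] by (simp add: abs_mult mult_mono)
    then show "integrable M (\<lambda>y. g q y * g q' y)"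
      using borel_measurable_times[OF g_meas[OF that(1)] g_meas[OF that(2)]]
      by (intro finite_measure.integrable_const_bound[OF fin_M, where B="C * C"]) auto
  qed
  have G_meas [measurable]: "G q \<in> borel_measurable P" if "q \<in> Q" for q
    unfolding G_def P_def
  proof (intro borel_measurable_prod)
    fix i assume "i \<in> I"
    then show "(\<lambda>x. g q (x i)) \<in> borel_measurable (Pi\<^sub>M I (\<lambda>_. M))"
      using measurable_compose[OF measurable_component_singleton[of i I "\<lambda>_. M"] g_meas[OF that]] by simp
  qed
  have G_bounded: "0 \<le> G q x \<and> G q x \<le> C ^ card I" if "q \<in> Q" for q x
  proof -
    have "G q x \<le> (\<Prod>i\<in>I. C)"
      unfolding G_def using g_bounded[OF that] by (intro prod_mono) auto
    then show ?thesis
      unfolding G_def using g_bounded[OF that] by (auto intro: prod_nonneg)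
  qed
  have L_bounded: "0 \<le> L x \<and> L x \<le> C ^ card I" for x
  proof -
    have "(\<Sum>q\<in>Q. G q x) \<le> c * C ^ card I"
      unfolding c_def using G_bounded sum_mono[of Q "\<lambda>q. G q x" "\<lambda>_. C ^ card I"] by simp
    moreover have "0 \<le> (\<Sum>q\<in>Q. G q x)"
      using G_bounded by (intro sum_nonneg) auto
    ultimately show ?thesis
      unfolding L_def using c by (auto simp: field_simps)
  qed
  have L_meas [measurable]: "L \<in> borel_measurable P"
    unfolding L_def using G_meas by (intro borel_measurable_divide borel_measurable_sum) auto
  have G_integrable: "integrable P (G q)" "integrable P (\<lambda>x. G q x * G q' x)"
    if "q \<in> Q" "q' \<in> Q" for q q'
  proof -
    show "integrable P (G q)"
      using G_bounded[OF that(1)] G_meas[OF that(1)] by (intro P.integrable_const_bound[where B="C ^ card I"]) auto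
    have "\<bar>G q x * G q' x\<bar> \<le> C ^ card I * C ^ card I" for x
      using G_bounded[OF that(1), of x] G_bounded[OF that(2), of x] by (simp add: abs_mult mult_mono)
    then show "integrable P (\<lambda>x. G q x * G q' x)"
      using borel_measurable_times[OF G_meas[OF that(1)] G_meas[OF that(2)]]
      by (intro P.integrable_const_bound[where B="C ^ card I * C ^ card I"]) auto
  qed
  have L_integrable: "integrable P L" "integrable P (\<lambda>x. (L x)\<^sup>2)"
  proof -
    show "integrable P L"
      using L_bounded by (intro P.integrable_const_bound[where B="C ^ card I"]) auto
    have "\<bar>(L x)\<^sup>2\<bar> \<le> C ^ card I * C ^ card I" for x
      using L_bounded[of x] by (simp add: power2_eq_square mult_mono)
    then show "integrable P (\<lambda>x. (L x)\<^sup>2)"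
      by (intro P.integrable_const_bound[where B="C ^ card I * C ^ card I"]) auto
  qed
  have integral_G: "integral\<^sup>L P (G q) = 1" if "q \<in> Q" for q
    unfolding G_def P_def using I g_int[OF that] g_integrable[OF that that]
    by (subst M.product_integral_prod) auto
  have integral_GG: "integral\<^sup>L P (\<lambda>x. G q x * G q' x) = (\<integral>y. g q y * g q' y \<partial>M) ^ card I"
    if "q \<in> Q" "q' \<in> Q" for q q'
  proof -
    have "integral\<^sup>L P (\<lambda>x. G q x * G q' x) = integral\<^sup>L P (\<lambda>x. \<Prod>i\<in>I. g q (x i) * g q' (x i))"
      unfolding G_def by (simp add: prod.distrib)
    also have "\<dots> = (\<Prod>i\<in>I. \<integral>y. g q y * g q' y \<partial>M)"
      unfolding P_def using I g_integrable[OF that] by (subst M.product_integral_prod) auto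
    finally show ?thesis by simp
  qed
  have integral_L: "P.expectation L = 1"
    unfolding L_def using G_integrable integral_G c
    by (simp add: Bochner_Integration.integral_sum c_def)
  have integral_L_sq: "P.expectation (\<lambda>x. (L x)\<^sup>2) \<le> 1 + 2 * \<alpha>\<^sup>2"
  proof -
    have "P.expectation (\<lambda>x. (L x)\<^sup>2) = P.expectation (\<lambda>x. \<Sum>q\<in>Q. \<Sum>q'\<in>Q. G q x * G q' x) / c\<^sup>2"
      unfolding L_def by (simp add: sum_product power2_eq_square power_divide)
    also have "\<dots> = (\<Sum>q\<in>Q. \<Sum>q'\<in>Q. (\<integral>y. g q y * g q' y \<partial>M) ^ card I) / c\<^sup>2"
      using G_integrable by (simp add: Bochner_Integration.integral_sum integral_GG)
    also have "\<dots> \<le> 1 + 2 * \<alpha>\<^sup>2"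
      using chi c unfolding c_def by (simp add: divide_le_eq)
    finally show ?thesis .
  qed
  have alternative: "measure (PiM I (\<lambda>_. density M (\<lambda>y. ennreal (g q y)))) A = P.expectation (\<lambda>x. G q x * indicator A x)"
    if "q \<in> Q" "A \<in> sets P" for q A
  proof -
    have "(\<integral>\<^sup>+ y. ennreal (g q y) \<partial>M) = ennreal (integral\<^sup>L M (g q))"
      using g_bounded[OF that(1)] g_integrable[OF that(1) that(1)] by (intro nn_integral_eq_integral) auto
    then have "PiM I (\<lambda>_. density M (\<lambda>y. ennreal (g q y))) = density P (\<lambda>x. \<Prod>i\<in>I. ennreal (g q (x i)))"
      unfolding P_def using g_int[OF that(1)]
      by (intro PiM_density_eq_density_PiM I prob_space_imp_sigma_finite M g_meas[OF that(1)]) simp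
    also have "\<dots> = density P (\<lambda>x. ennreal (G q x))"
      unfolding G_def using g_bounded[OF that(1)] by (simp add: prod_ennreal)
    finally have dens: "PiM I (\<lambda>_. density M (\<lambda>y. ennreal (g q y))) = density P (\<lambda>x. ennreal (G q x))" .
    have int: "integrable P (\<lambda>x. G q x * indicator A x)"
      using that(2) G_integrable(1)[OF that(1) that(1)] by (rule integrable_real_mult_indicator)
    have "emeasure (density P (\<lambda>x. ennreal (G q x))) A = (\<integral>\<^sup>+ x. ennreal (G q x * indicator A x) \<partial>P)"
      using that by (subst emeasure_density) (auto intro!: nn_integral_cong simp: indicator_def)
    also have "\<dots> = ennreal (P.expectation (\<lambda>x. G q x * indicator A x))"
      using int G_bounded[OF that(1)] by (intro nn_integral_eq_integral) auto
    finally show ?thesis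
      unfolding dens measure_def using G_bounded[OF that(1)] by simp
  qed
  have "(\<Sum>q\<in>Q. measure (PiM I (\<lambda>_. density M (\<lambda>y. ennreal (g q y)))) (space P - B)) / c =
      P.expectation (\<lambda>x. (\<Sum>q\<in>Q. G q x * indicator (space P - B) x) / c)"
    using B G_integrable by (simp add: alternative Bochner_Integration.integral_sum integrable_real_mult_indicator)
  also have "\<dots> = P.expectation (\<lambda>x. L x * indicator (space P - B) x)"
    unfolding L_def by (simp add: sum_distrib_right)
  finally show ?thesis
    using P.prob_plus_integral_compl_ge[OF B L_integrable integral_L integral_L_sq \<alpha>] c_def by simp
qed

lemma cconv_nonneg:
  assumes "f \<in> Dens" and "\<phi> \<in> Dens"
  shows "0 \<le> cconv f \<phi> y"
  unfolding cconv_def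
  by (rule Bochner_Integration.integral_nonneg)
    (use assms frac_diff_in_unit[of y] in \<open>auto simp: Dens_def\<close>)

lemma minimax_risk_ge_of_chi_square:
  fixes F :: "'q \<Rightarrow> real \<Rightarrow> real" and a :: "'q \<Rightarrow> nat \<Rightarrow> real" and r :: "(nat \<Rightarrow> real) \<Rightarrow> real"
  assumes phi: "\<phi> \<in> Dens" and Q: "finite Q" "Q \<noteq> {}" and \<alpha>: "0 < \<alpha>"
    and alt: "\<And>q. q \<in> Q \<Longrightarrow> F q \<in> Dens \<and> a q \<in> AA \<and>
      (\<lambda>x. complex_of_real (F q x - fcirc x)) \<in> ellipsoid (a q) R \<and>
      r (a q) \<le> l2norm (\<lambda>x. complex_of_real (F q x - fcirc x))"
    and bounded: "\<And>q y. q \<in> Q \<Longrightarrow> cconv (F q) \<phi> y \<le> C"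
    and mass: "\<And>q. q \<in> Q \<Longrightarrow> integral\<^sup>L M0 (cconv (F q) \<phi>) = 1"
    and chi: "(\<Sum>q\<in>Q. \<Sum>q'\<in>Q. (\<integral>y. cconv (F q) \<phi> y * cconv (F q') \<phi> y \<partial>M0) ^ n)
      \<le> (1 + 2 * \<alpha>\<^sup>2) * (real (card Q))\<^sup>2"
  shows "1 - \<alpha> \<le> (INF \<Delta>\<in>tests n. SUP a\<in>AA. risk \<phi> n \<Delta> (ellipsoid a R) (r a))"
proof (rule cINF_greatest)
  show "tests n \<noteq> {}"
    using tests_def by fastforce
next
  fix \<Delta> assume \<Delta>: "\<Delta> \<in> tests n"
  define P where "P = PiM {0..<n} (\<lambda>_. M0)"
  define B where "B = {y \<in> space P. \<Delta> y = 1}"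
  define S where "S = (SUP a\<in>AA. risk \<phi> n \<Delta> (ellipsoid a R) (r a))"
  have B: "B \<in> sets P"
  proof -
    have "\<Delta> -` {1} \<inter> space P \<in> sets P"
      using \<Delta> unfolding tests_def P_def by (intro measurable_sets[of _ _ "count_space UNIV"]) auto
    moreover have "\<Delta> -` {1} \<inter> space P = B"
      unfolding B_def by auto
    ultimately show ?thesis by simp
  qed
  have errors_le: "measure P B + measure (Pf \<phi> n (F q)) (space P - B) \<le> S" if "q \<in> Q" for q
  proof -
    have "space P - B = {y \<in> space (Pf \<phi> n (F q)). \<Delta> y = 0}"
      using \<Delta> unfolding B_def P_def Pf_def tests_def by (auto simp: space_PiM)
    moreover have "P = Pf \<phi> n fcirc" and "B = {y \<in> space (Pf \<phi> n fcirc). \<Delta> y = 1}"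
      unfolding B_def P_def Pf_fcirc[OF phi] by simp_all
    ultimately have "measure P B + measure (Pf \<phi> n (F q)) (space P - B) \<le> risk \<phi> n \<Delta> (ellipsoid (a q) R) (r (a q))"
      using risk_ge_errors[OF phi] alt[OF that] by simp
    also have "\<dots> \<le> S"
      unfolding S_def using alt[OF that]
      by (intro cSUP_upper bdd_aboveI[where M=2]) (auto intro: risk_le_2[OF phi])
    finally show ?thesis .
  qed
  have g: "\<And>q. q \<in> Q \<Longrightarrow> cconv (F q) \<phi> \<in> borel_measurable M0"
    "\<And>q y. q \<in> Q \<Longrightarrow> 0 \<le> cconv (F q) \<phi> y \<and> cconv (F q) \<phi> y \<le> C"
    using alt bounded cconv_nonneg[OF _ phi] borel_measurable_cconv[OF _ phi] by auto
  have "1 - \<alpha> \<le> measure P B + (\<Sum>q\<in>Q. measure (Pf \<phi> n (F q)) (space P - B)) / real (card Q)"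
    unfolding P_def Pf_def
    by (rule mixture_PiM_test_error_ge[OF prob_space_M0 _ Q g mass])
      (use B chi \<alpha> in \<open>simp_all add: P_def\<close>)
  also have "\<dots> = (\<Sum>q\<in>Q. measure P B + measure (Pf \<phi> n (F q)) (space P - B)) / real (card Q)"
    using Q by (simp add: sum.distrib add_divide_distrib)
  also have "\<dots> \<le> (\<Sum>q\<in>Q. S) / real (card Q)"
    by (intro divide_right_mono sum_mono errors_le) auto
  also have "\<dots> = S"
    using Q by simp
  finally show "1 - \<alpha> \<le> S" .
qed

definition fc_norm :: "(real \<Rightarrow> real) \<Rightarrow> int \<Rightarrow> real" where
  "fc_norm \<phi> j = cmod (fc (\<lambda>x. complex_of_real (\<phi> x)) j)"

lemma fc_norm_uminus [simp]: "fc_norm \<phi> (- j) = fc_norm \<phi> j"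
  unfolding fc_norm_def by (simp add: fc_of_real_uminus)

definition nu4 :: "(real \<Rightarrow> real) \<Rightarrow> nat \<Rightarrow> real" where
  "nu4 \<phi> k = (\<Sum>j\<in>freqs k. 1 / fc_norm \<phi> j ^ 4)"

lemma nu4_eq_sum_pos: "nu4 \<phi> k = 2 * (\<Sum>i\<in>{1..k}. 1 / fc_norm \<phi> (int i) ^ 4)"
  unfolding nu4_def by (rule sum_freqs_even) simp

lemma nu4_ge:
  assumes "\<phi> \<in> Dens" and "\<And>j. fc_norm \<phi> j > 0"
  shows "2 * real k \<le> nu4 \<phi> k"
proof -
  have "1 \<le> 1 / fc_norm \<phi> (int i) ^ 4" for i
    using norm_fc_Dens_le_1[OF assms(1)] assms(2)[of "int i"]
    by (simp add: fc_norm_def power_le_one)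
  then have "(\<Sum>i\<in>{1..k}. 1) \<le> (\<Sum>i\<in>{1..k}. 1 / fc_norm \<phi> (int i) ^ 4)"
    by (intro sum_mono)
  then show ?thesis
    unfolding nu4_eq_sum_pos by simp
qed

lemma nu_sq:
  assumes "\<And>j. fc_norm \<phi> j > 0"
  shows "(nu \<phi> k)\<^sup>2 = sqrt (nu4 \<phi> k)"
proof -
  have "fc_norm \<phi> j powr (-4) = 1 / fc_norm \<phi> j ^ 4" for j
    using assms[of j] by (simp add: powr_minus powr_realpow divide_inverse)
  then have nu4: "nu \<phi> k = nu4 \<phi> k powr (1/4)"
    unfolding nu_def nu4_def fc_norm_def[symmetric] freqs_def[symmetric] by simp
  have "0 \<le> nu4 \<phi> k"
    unfolding nu4_def by (simp add: sum_nonneg)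
  then have "nu4 \<phi> k powr (1/4) * nu4 \<phi> k powr (1/4) = nu4 \<phi> k powr (1/2)"
    by (cases "nu4 \<phi> k = 0") (simp_all add: powr_add[symmetric])
  then show ?thesis
    using \<open>0 \<le> nu4 \<phi> k\<close> unfolding nu4 by (simp add: power2_eq_square powr_half_sqrt)
qed

text \<open>The infimum defining \<^const>\<open>rho\<close> is attained because \<open>\<nu>\<^sub>k\<^sup>2 \<ge> \<surd>(2k)\<close>
  tends to infinity.\<close>

lemma rho_attained_at_kk:
  assumes phi: "\<phi> \<in> Dens" and pos: "\<And>j. fc_norm \<phi> j > 0" and x: "x > 0"
  shows "1 \<le> kk \<phi> a x" "max ((a (kk \<phi> a x))\<^sup>2) ((nu \<phi> (kk \<phi> a x))\<^sup>2 / x) = (rho \<phi> a x)\<^sup>2"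
    "0 \<le> rho \<phi> a x"
proof -
  define F where "F k = max ((a k)\<^sup>2) ((nu \<phi> k)\<^sup>2 / x)" for k
  have F_ge: "sqrt (real k) / x \<le> F k" for k
  proof -
    have "sqrt (real k) \<le> sqrt (nu4 \<phi> k)"
      using nu4_ge[OF phi pos, of k] by simp
    then have "sqrt (real k) / x \<le> sqrt (nu4 \<phi> k) / x"
      using x by (intro divide_right_mono) auto
    then show ?thesis
      unfolding F_def nu_sq[OF pos] by (simp add: le_max_iff_disj)
  qed
  define S where "S = {k. 1 \<le> k \<and> F k \<le> F 1}"
  have "S \<subseteq> {..nat \<lceil>(x * F 1)\<^sup>2\<rceil>}"
  proof
    fix k assume "k \<in> S"
    then have "sqrt (real k) / x \<le> F 1"
      using F_ge[of k] unfolding S_def by auto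
    then have "sqrt (real k) \<le> x * F 1"
      using x by (simp add: divide_le_eq mult.commute)
    then have "(sqrt (real k))\<^sup>2 \<le> (x * F 1)\<^sup>2"
      by (intro power_mono) auto
    then show "k \<in> {..nat \<lceil>(x * F 1)\<^sup>2\<rceil>}"
      by (simp add: le_nat_iff) linarith
  qed
  then have "finite S"
    by (rule finite_subset) simp
  moreover have "1 \<in> S"
    unfolding S_def by simp
  ultimately obtain k0 where k0: "k0 \<in> S" "\<And>k. k \<in> S \<Longrightarrow> F k0 \<le> F k"
    using arg_min_if_finite[of S F] by (metis empty_iff not_le)
  have k0_min: "F k0 \<le> F k" if "1 \<le> k" for k
  proof (cases "k \<in> S")
    case False
    then have "F 1 < F k" using that unfolding S_def by auto
    moreover have "F k0 \<le> F 1" using k0(1) unfolding S_def by auto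
    ultimately show ?thesis by simp
  qed (rule k0(2))
  have k0_1: "1 \<le> k0"
    using k0(1) unfolding S_def by simp
  have inf: "(INF k\<in>{1..}. F k) = F k0"
    by (rule cInf_eq_minimum) (use k0_1 k0_min in auto)
  have F0: "0 \<le> F k0"
    unfolding F_def by (simp add: le_max_iff_disj)
  have rho_sq: "(rho \<phi> a x)\<^sup>2 = F k0"
    unfolding rho_def F_def[symmetric] inf using F0 by simp
  have "1 \<le> kk \<phi> a x \<and> F (kk \<phi> a x) = (rho \<phi> a x)\<^sup>2"
    unfolding kk_def F_def[symmetric] by (rule LeastI[of _ k0]) (use k0_1 rho_sq in simp)
  then show "1 \<le> kk \<phi> a x" "max ((a (kk \<phi> a x))\<^sup>2) ((nu \<phi> (kk \<phi> a x))\<^sup>2 / x) = (rho \<phi> a x)\<^sup>2"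
    unfolding F_def by auto
  show "0 \<le> rho \<phi> a x"
    unfolding rho_def F_def[symmetric] inf using F0 by simp
qed

subsection \<open>Sign perturbations of the uniform density\<close>

text \<open>Dividing by \<open>|\<phi>\<^sub>j|\<^sup>2\<close> compensates the damping by the convolution, so that the
  perturbation of the observed density has coefficients of modulus \<open>z / |\<phi>\<^sub>j|\<close>.\<close>

definition pert_coeff :: "(real \<Rightarrow> real) \<Rightarrow> (nat \<Rightarrow> real) \<Rightarrow> real \<Rightarrow> int \<Rightarrow> real" where
  "pert_coeff \<phi> \<theta> z j = \<theta> (nat \<bar>j\<bar>) * z / (fc_norm \<phi> j)\<^sup>2"

definition pert_dens :: "(real \<Rightarrow> real) \<Rightarrow> (nat \<Rightarrow> real) \<Rightarrow> real \<Rightarrow> nat \<Rightarrow> real \<Rightarrow> real" where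
  "pert_dens \<phi> \<theta> z k x = 1 + Re (trig_poly (\<lambda>j. of_real (pert_coeff \<phi> \<theta> z j)) k x)"

definition pert_conv :: "(real \<Rightarrow> real) \<Rightarrow> (nat \<Rightarrow> real) \<Rightarrow> real \<Rightarrow> nat \<Rightarrow> real \<Rightarrow> real" where
  "pert_conv \<phi> \<theta> z k y =
    1 + Re (trig_poly (\<lambda>j. of_real (pert_coeff \<phi> \<theta> z j) * fc (\<lambda>x. complex_of_real (\<phi> x)) (- j)) k y)"

lemma pert_coeff_uminus [simp]: "pert_coeff \<phi> \<theta> z (- j) = pert_coeff \<phi> \<theta> z j"
  unfolding pert_coeff_def by simp

lemma signs_freqs:
  assumes "\<forall>i\<in>{1..k}. \<theta> i \<in> {-1, 1::real}" and "j \<in> freqs k"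
  shows "\<theta> (nat \<bar>j\<bar>) \<in> {-1, 1}"
  using assms unfolding freqs_def
  by (metis (mono_tags, lifting) atLeastAtMost_iff mem_Collect_eq nat_le_iff nat_mono nat_one_as_int)

lemma pert_coeff_sign:
  assumes "\<theta> (nat \<bar>j\<bar>) \<in> {-1, 1}"
  shows "(pert_coeff \<phi> \<theta> z j)\<^sup>2 = z\<^sup>2 / fc_norm \<phi> j ^ 4"
    "\<bar>pert_coeff \<phi> \<theta> z j\<bar> = \<bar>z\<bar> / (fc_norm \<phi> j)\<^sup>2"
  using assms unfolding pert_coeff_def by (auto simp: power2_eq_square power4_eq_xxxx abs_mult)

lemma continuous_on_pert_dens: "continuous_on S (pert_dens \<phi> \<theta> z k)"
  unfolding pert_dens_def by (intro continuous_intros)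

lemma continuous_on_pert_conv: "continuous_on S (pert_conv \<phi> \<theta> z k)"
  unfolding pert_conv_def by (intro continuous_intros)

lemma of_real_pert_dens:
  "complex_of_real (pert_dens \<phi> \<theta> z k x) = 1 + trig_poly (\<lambda>j. of_real (pert_coeff \<phi> \<theta> z j)) k x"
  using trig_poly_real[of "\<lambda>j. of_real (pert_coeff \<phi> \<theta> z j)" k x] unfolding pert_dens_def by simp

lemma cconv_pert_dens:
  assumes "\<phi> \<in> Dens"
  shows "cconv (pert_dens \<phi> \<theta> z k) \<phi> = pert_conv \<phi> \<theta> z k"
proof
  fix y
  have "complex_of_real (cconv (pert_dens \<phi> \<theta> z k) \<phi> y) =
      1 + trig_poly (\<lambda>j. of_real (pert_coeff \<phi> \<theta> z j) * fc (\<lambda>x. complex_of_real (\<phi> x)) (- j)) k y"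
    by (rule cconv_one_plus_trig_poly[OF assms]) (simp_all add: pert_dens_def)
  then show "cconv (pert_dens \<phi> \<theta> z k) \<phi> y = pert_conv \<phi> \<theta> z k y"
    unfolding pert_conv_def by (metis Re_complex_of_real plus_complex.sel(1) one_complex.sel(1))
qed

lemma pert_dens_nonneg:
  assumes "(\<Sum>j\<in>freqs k. \<bar>pert_coeff \<phi> \<theta> z j\<bar>) \<le> 1"
  shows "0 \<le> pert_dens \<phi> \<theta> z k x"
proof -
  have "\<bar>Re (trig_poly (\<lambda>j. of_real (pert_coeff \<phi> \<theta> z j)) k x)\<bar> \<le> 1"
    using abs_Re_le_cmod norm_trig_poly_le[of "\<lambda>j. of_real (pert_coeff \<phi> \<theta> z j)" k x] assms
    by (smt (verit) norm_of_real sum.cong)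
  then show ?thesis
    unfolding pert_dens_def by linarith
qed

lemma pert_conv_bounds:
  assumes phi: "\<phi> \<in> Dens" and l1: "(\<Sum>j\<in>freqs k. \<bar>pert_coeff \<phi> \<theta> z j\<bar>) \<le> 1"
  shows "0 \<le> pert_conv \<phi> \<theta> z k y" "pert_conv \<phi> \<theta> z k y \<le> 2"
proof -
  have "0 \<le> cconv (pert_dens \<phi> \<theta> z k) \<phi> y"
    unfolding cconv_def
    by (rule Bochner_Integration.integral_nonneg) (use phi pert_dens_nonneg[OF l1] in \<open>auto simp: Dens_def\<close>)
  then show "0 \<le> pert_conv \<phi> \<theta> z k y"
    by (simp add: cconv_pert_dens[OF phi])
  let ?b = "\<lambda>j. of_real (pert_coeff \<phi> \<theta> z j) * fc (\<lambda>x. complex_of_real (\<phi> x)) (- j)"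
  have "\<bar>Re (trig_poly ?b k y)\<bar> \<le> (\<Sum>j\<in>freqs k. cmod (?b j))"
    using abs_Re_le_cmod norm_trig_poly_le by (rule order.trans)
  also have "\<dots> \<le> (\<Sum>j\<in>freqs k. \<bar>pert_coeff \<phi> \<theta> z j\<bar>)"
    using norm_fc_Dens_le_1[OF phi] by (intro sum_mono) (simp add: norm_mult mult_left_le)
  finally show "pert_conv \<phi> \<theta> z k y \<le> 2"
    using l1 unfolding pert_conv_def by linarith
qed

lemma pert_dens_in_Dens:
  assumes "(\<Sum>j\<in>freqs k. \<bar>pert_coeff \<phi> \<theta> z j\<bar>) \<le> 1"
  shows "pert_dens \<phi> \<theta> z k \<in> Dens"
proof -
  have meas: "pert_dens \<phi> \<theta> z k \<in> borel_measurable M0"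
    by (intro borel_measurable_M0I borel_measurable_continuous_onI continuous_on_pert_dens)
  have "integrable M0 (\<lambda>x. complex_of_real (pert_dens \<phi> \<theta> z k x))"
    by (intro integrable_M0_continuous continuous_intros continuous_on_pert_dens)
  then have int: "integrable M0 (pert_dens \<phi> \<theta> z k)"
    by (simp add: complex_of_real_integrable_eq)
  have "complex_of_real (integral\<^sup>L M0 (pert_dens \<phi> \<theta> z k)) =
      integral\<^sup>L M0 (\<lambda>x. 1 + trig_poly (\<lambda>j. of_real (pert_coeff \<phi> \<theta> z j)) k x)"
    unfolding integral_complex_of_real[symmetric] of_real_pert_dens ..
  also have "\<dots> = 1"
    using M0.prob_space
    by (subst Bochner_Integration.integral_add) (auto simp: integral_trig_poly measure_def)
  finally have "integral\<^sup>L M0 (pert_dens \<phi> \<theta> z k) = 1"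
    by simp
  moreover have "(\<lambda>x. complex_of_real (pert_dens \<phi> \<theta> z k x)) \<in> L2"
    unfolding L2_def
    by (auto intro!: integrable_M0_continuous continuous_intros continuous_on_pert_dens
        borel_measurable_M0I borel_measurable_continuous_onI)
  ultimately show ?thesis
    unfolding Dens_def using meas int pert_dens_nonneg[OF assms] by auto
qed

lemma integral_pert_conv: "integral\<^sup>L M0 (pert_conv \<phi> \<theta> z k) = 1"
proof -
  let ?b = "\<lambda>j. of_real (pert_coeff \<phi> \<theta> z j) * fc (\<lambda>x. complex_of_real (\<phi> x)) (- j)"
  have "integral\<^sup>L M0 (pert_conv \<phi> \<theta> z k) = integral\<^sup>L M0 (\<lambda>y. 1) + integral\<^sup>L M0 (\<lambda>y. Re (trig_poly ?b k y))"
    unfolding pert_conv_def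
    by (intro Bochner_Integration.integral_add) (auto intro!: integrable_M0_continuous continuous_intros)
  also have "integral\<^sup>L M0 (\<lambda>y. Re (trig_poly ?b k y)) = 0"
    using integral_trig_poly[of ?b k] by simp
  finally show ?thesis
    using M0.prob_space by (simp add: measure_def)
qed

lemma integral_pert_conv_mult:
  "integral\<^sup>L M0 (\<lambda>y. pert_conv \<phi> \<theta> z k y * pert_conv \<phi> \<theta>' z' k' y) =
    1 + (\<Sum>j\<in>freqs (min k k'). pert_coeff \<phi> \<theta> z j * pert_coeff \<phi> \<theta>' z' j * (fc_norm \<phi> j)\<^sup>2)"
proof -
  let ?c = "fc (\<lambda>x. complex_of_real (\<phi> x))"
  have "integral\<^sup>L M0 (\<lambda>y. pert_conv \<phi> \<theta> z k y * pert_conv \<phi> \<theta>' z' k' y) =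
      1 + Re (\<Sum>j\<in>freqs (min k k').
        (of_real (pert_coeff \<phi> \<theta> z j) * ?c (- j)) * cnj (of_real (pert_coeff \<phi> \<theta>' z' j) * ?c (- j)))"
    unfolding pert_conv_def
    by (rule integral_one_plus_Re_trig_poly_mult) (simp_all add: fc_of_real_uminus)
  also have "\<dots> = 1 + (\<Sum>j\<in>freqs (min k k'). pert_coeff \<phi> \<theta> z j * pert_coeff \<phi> \<theta>' z' j * (fc_norm \<phi> j)\<^sup>2)"
  proof -
    have "?c (- j) * cnj (?c (- j)) = of_real ((fc_norm \<phi> j)\<^sup>2)" for j
      using complex_norm_square[of "?c (- j)"] fc_norm_uminus[of \<phi> j] unfolding fc_norm_def by simp
    then have "(of_real (pert_coeff \<phi> \<theta> z j) * ?c (- j)) * cnj (of_real (pert_coeff \<phi> \<theta>' z' j) * ?c (- j)) =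
        of_real (pert_coeff \<phi> \<theta> z j * pert_coeff \<phi> \<theta>' z' j * (fc_norm \<phi> j)\<^sup>2)" for j
      by (simp add: mult_ac)
    then show ?thesis
      by (simp only: of_real_sum[symmetric] Re_complex_of_real)
  qed
  finally show ?thesis .
qed

lemma pert_diff_eq_trig_poly:
  "x \<in> space M0 \<Longrightarrow>
    complex_of_real (pert_dens \<phi> \<theta> z k x - fcirc x) = trig_poly (\<lambda>j. of_real (pert_coeff \<phi> \<theta> z j)) k x"
  unfolding fcirc_def using of_real_pert_dens[of \<phi> \<theta> z k x] by simp

lemma pert_diff_in_L2: "(\<lambda>x. complex_of_real (pert_dens \<phi> \<theta> z k x - fcirc x)) \<in> L2"
proof -
  have [measurable]: "pert_dens \<phi> \<theta> z k \<in> borel_measurable M0"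
    by (intro borel_measurable_M0I borel_measurable_continuous_onI continuous_on_pert_dens)
  have [measurable]: "fcirc \<in> borel_measurable M0"
    unfolding fcirc_def by (intro borel_measurable_M0I) simp
  have "integrable M0 (\<lambda>x. (cmod (complex_of_real (pert_dens \<phi> \<theta> z k x - fcirc x)))\<^sup>2) \<longleftrightarrow>
      integrable M0 (\<lambda>x. (cmod (trig_poly (\<lambda>j. of_real (pert_coeff \<phi> \<theta> z j)) k x))\<^sup>2)"
    by (intro Bochner_Integration.integrable_cong refl) (simp only: pert_diff_eq_trig_poly)
  moreover have "integrable M0 (\<lambda>x. (cmod (trig_poly (\<lambda>j. of_real (pert_coeff \<phi> \<theta> z j)) k x))\<^sup>2)"
    by (rule integrable_M0_continuous) (intro continuous_intros)
  ultimately show ?thesis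
    unfolding L2_def by simp
qed

lemma fc_pert_diff:
  assumes "1 \<le> i"
  shows "fc (\<lambda>x. complex_of_real (pert_dens \<phi> \<theta> z k x - fcirc x)) (int i) =
    (if i \<le> k then of_real (pert_coeff \<phi> \<theta> z (int i)) else 0)"
proof -
  have "fc (\<lambda>x. complex_of_real (pert_dens \<phi> \<theta> z k x - fcirc x)) (int i) =
      integral\<^sup>L M0 (\<lambda>x. trig_poly (\<lambda>j. of_real (pert_coeff \<phi> \<theta> z j)) k x * circ_char (int i) x)"
    unfolding fc_def cnj_ebase
    by (intro Bochner_Integration.integral_cong refl) (simp only: pert_diff_eq_trig_poly)
  also have "\<dots> = (if i \<le> k then of_real (pert_coeff \<phi> \<theta> z (int i)) else 0)"
    using assms by (simp add: integral_trig_poly_mult_circ_char freqs_def)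
  finally show ?thesis .
qed

lemma l2norm_pert_diff:
  "l2norm (\<lambda>x. complex_of_real (pert_dens \<phi> \<theta> z k x - fcirc x)) =
    sqrt (\<Sum>j\<in>freqs k. (pert_coeff \<phi> \<theta> z j)\<^sup>2)"
proof -
  let ?T = "trig_poly (\<lambda>j. complex_of_real (pert_coeff \<phi> \<theta> z j)) k"
  have norm_sq: "(cmod w)\<^sup>2 = Re (w * cnj w)" for w
    by (simp only: complex_norm_square[symmetric] Re_complex_of_real)
  have "integral\<^sup>L M0 (\<lambda>x. (cmod (complex_of_real (pert_dens \<phi> \<theta> z k x - fcirc x)))\<^sup>2) =
      integral\<^sup>L M0 (\<lambda>x. Re (?T x * cnj (?T x)))"
    by (intro Bochner_Integration.integral_cong refl) (simp only: pert_diff_eq_trig_poly norm_sq)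
  also have "\<dots> = Re (integral\<^sup>L M0 (\<lambda>x. ?T x * cnj (?T x)))"
    by (rule integral_Re) (intro integrable_M0_continuous continuous_intros)
  also have "\<dots> = (\<Sum>j\<in>freqs k. (pert_coeff \<phi> \<theta> z j)\<^sup>2)"
    by (simp add: integral_trig_poly_mult_cnj power2_eq_square)
  finally show ?thesis
    unfolding l2norm_def by simp
qed

lemma pert_diff_in_ellipsoid:
  assumes "\<And>i. 1 \<le> i \<Longrightarrow> i \<le> k \<Longrightarrow> a i \<noteq> 0"
    and "2 * (\<Sum>i\<in>{1..k}. inverse ((a i)\<^sup>2) * (pert_coeff \<phi> \<theta> z (int i))\<^sup>2) \<le> R\<^sup>2"
  shows "(\<lambda>x. complex_of_real (pert_dens \<phi> \<theta> z k x - fcirc x)) \<in> ellipsoid a R"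
proof -
  let ?s = "\<Sum>i\<in>{1..k}. inverse ((a i)\<^sup>2) * (pert_coeff \<phi> \<theta> z (int i))\<^sup>2"
  have "((\<lambda>i. inverse ((a i)\<^sup>2) * (pert_coeff \<phi> \<theta> z (int i))\<^sup>2) has_sum ?s) {1..k}"
    by simp
  then have "((\<lambda>j. inverse ((a j)\<^sup>2) *
      (cmod (fc (\<lambda>x. complex_of_real (pert_dens \<phi> \<theta> z k x - fcirc x)) (int j)))\<^sup>2) has_sum ?s) {1..}"
    by (rule has_sum_cong_neutral[THEN iffD1, rotated -1]) (auto simp: fc_pert_diff simp del: of_real_diff)
  then show ?thesis
    unfolding ellipsoid_def using pert_diff_in_L2 assms(2) by blast
qed

lemma sum_sq_pert_coeff:
  assumes "\<forall>i\<in>{1..k}. \<theta> i \<in> {-1, 1}"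
  shows "(\<Sum>j\<in>freqs k. (pert_coeff \<phi> \<theta> z j)\<^sup>2) = z\<^sup>2 * nu4 \<phi> k"
  unfolding nu4_def sum_distrib_left
  using signs_freqs[OF assms] by (intro sum.cong refl) (simp add: pert_coeff_sign)

lemma sum_abs_pert_coeff_sq_le:
  assumes "\<forall>i\<in>{1..k}. \<theta> i \<in> {-1, 1}"
  shows "(\<Sum>j\<in>freqs k. \<bar>pert_coeff \<phi> \<theta> z j\<bar>)\<^sup>2 \<le> 2 * real k * (z\<^sup>2 * nu4 \<phi> k)"
proof -
  define S where "S = (\<Sum>i\<in>{1..k}. 1 / (fc_norm \<phi> (int i))\<^sup>2)"
  have "(\<Sum>j\<in>freqs k. \<bar>pert_coeff \<phi> \<theta> z j\<bar>) = (\<Sum>j\<in>freqs k. \<bar>z\<bar> / (fc_norm \<phi> j)\<^sup>2)"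
    using signs_freqs[OF assms] by (intro sum.cong refl) (simp add: pert_coeff_sign)
  also have "\<dots> = 2 * (\<bar>z\<bar> * S)"
    unfolding S_def by (subst sum_freqs_even) (simp_all add: sum_distrib_left)
  finally have sum_sq: "(\<Sum>j\<in>freqs k. \<bar>pert_coeff \<phi> \<theta> z j\<bar>)\<^sup>2 = 4 * z\<^sup>2 * S\<^sup>2"
    by (simp add: power_mult_distrib)
  have "S\<^sup>2 \<le> (\<Sum>i\<in>{1..k}. (1 / (fc_norm \<phi> (int i))\<^sup>2)\<^sup>2) * card {1..k}"
    unfolding S_def by (rule sum_squared_le_sum_of_squares)
  also have "\<dots> = real k * (nu4 \<phi> k / 2)"
    unfolding nu4_eq_sum_pos by (simp add: power_divide power4_eq_xxxx power2_eq_square mult.assoc)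
  finally have "4 * z\<^sup>2 * S\<^sup>2 \<le> 4 * z\<^sup>2 * (real k * (nu4 \<phi> k / 2))"
    by (intro mult_left_mono) auto
  then show ?thesis
    unfolding sum_sq by (simp add: mult_ac)
qed

lemma antimono_from_1_le:
  fixes a :: "nat \<Rightarrow> real"
  assumes "\<forall>j\<ge>1. a (Suc j) \<le> a j" and "1 \<le> i" and "i \<le> k"
  shows "a k \<le> a i"
  using assms(3)
proof (induction k rule: dec_induct)
  case (step m)
  then show ?case
    using assms(1,2) order.trans[of "a (Suc m)" "a m" "a i"] by simp
qed simp

lemma mult_sq_le_has_sum:
  fixes a :: "nat \<Rightarrow> real"
  assumes a: "\<forall>j\<ge>1. 0 < a j \<and> a (Suc j) \<le> a j" and s: "((\<lambda>j. (a j)\<^sup>2) has_sum s) {1..}"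
  shows "real k * (a k)\<^sup>2 \<le> s"
proof -
  have "(a k)\<^sup>2 \<le> (a i)\<^sup>2" if "i \<in> {1..k}" for i
  proof (rule power_mono)
    show "a k \<le> a i"
      using a that by (intro antimono_from_1_le) auto
    have "1 \<le> k"
      using that by simp
    then show "0 \<le> a k"
      using a by (simp add: less_imp_le)
  qed
  then have "(\<Sum>i\<in>{1..k}. (a k)\<^sup>2) \<le> (\<Sum>i\<in>{1..k}. (a i)\<^sup>2)"
    by (rule sum_mono)
  also have "\<dots> \<le> s"
    by (rule has_sum_mono2[OF has_sum_finite[of "{1..k}"] s]) auto
  finally show ?thesis
    by simp
qed

lemma ellipsoid_sum_pert_coeff_le:
  fixes a :: "nat \<Rightarrow> real"
  assumes signs: "\<forall>i\<in>{1..k}. \<theta> i \<in> {-1, 1}"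
    and a: "0 < a k" "\<And>i. 1 \<le> i \<Longrightarrow> i \<le> k \<Longrightarrow> a k \<le> a i"
  shows "2 * (\<Sum>i\<in>{1..k}. inverse ((a i)\<^sup>2) * (pert_coeff \<phi> \<theta> z (int i))\<^sup>2) \<le>
    inverse ((a k)\<^sup>2) * (z\<^sup>2 * nu4 \<phi> k)"
proof -
  have "(\<Sum>i\<in>{1..k}. inverse ((a i)\<^sup>2) * (pert_coeff \<phi> \<theta> z (int i))\<^sup>2) \<le>
      (\<Sum>i\<in>{1..k}. inverse ((a k)\<^sup>2) * (z\<^sup>2 / fc_norm \<phi> (int i) ^ 4))"
  proof (rule sum_mono)
    fix i assume i: "i \<in> {1..k}"
    have "(a k)\<^sup>2 \<le> (a i)\<^sup>2"
      using a i by (intro power_mono) auto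
    then have "inverse ((a i)\<^sup>2) \<le> inverse ((a k)\<^sup>2)"
      using a by (intro le_imp_inverse_le) auto
    then have "inverse ((a i)\<^sup>2) * (pert_coeff \<phi> \<theta> z (int i))\<^sup>2 \<le>
        inverse ((a k)\<^sup>2) * (pert_coeff \<phi> \<theta> z (int i))\<^sup>2"
      by (rule mult_right_mono) simp
    moreover have "(pert_coeff \<phi> \<theta> z (int i))\<^sup>2 = z\<^sup>2 / fc_norm \<phi> (int i) ^ 4"
      using signs i by (intro pert_coeff_sign) simp
    ultimately show "inverse ((a i)\<^sup>2) * (pert_coeff \<phi> \<theta> z (int i))\<^sup>2 \<le>
        inverse ((a k)\<^sup>2) * (z\<^sup>2 / fc_norm \<phi> (int i) ^ 4)"
      by simp
  qed
  also have "\<dots> = (\<Sum>i\<in>{1..k}. (inverse ((a k)\<^sup>2) * z\<^sup>2) * (1 / fc_norm \<phi> (int i) ^ 4))"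
    by (intro sum.cong refl) simp
  also have "\<dots> = (inverse ((a k)\<^sup>2) * z\<^sup>2) * (\<Sum>i\<in>{1..k}. 1 / fc_norm \<phi> (int i) ^ 4)"
    by (rule sum_distrib_left[symmetric])
  finally show ?thesis
    unfolding nu4_eq_sum_pos by (simp add: mult_ac)
qed

subsection \<open>The \<open>\<chi>\<^sup>2\<close> term of a mixture of sign perturbations\<close>

lemma two_pow_mult_fact_le_fact_double: "2 ^ k * fact k \<le> (fact (2 * k) :: real)"
proof (induction k)
  case (Suc k)
  have "(2 :: real) ^ Suc k * fact (Suc k) = of_nat (2 * k + 2) * (2 ^ k * fact k)"
    by (simp add: algebra_simps)
  also have "\<dots> \<le> of_nat (2 * k + 2) * fact (2 * k)"
    using Suc by (intro mult_left_mono) auto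
  also have "\<dots> \<le> of_nat (2 * k + 2) * (of_nat (2 * k + 1) * fact (2 * k))"
    by (intro mult_left_mono) auto
  also have "\<dots> = fact (2 * Suc k)"
    by (simp add: algebra_simps)
  finally show ?case .
qed simp

lemma cosh_le_exp_half_sq: "cosh (x::real) \<le> exp (x\<^sup>2 / 2)"
proof -
  have divide_eq: "\<And>a b::real. a /\<^sub>R b = a / b"
    by (simp add: divide_inverse mult.commute)
  have "(\<lambda>n. if even n then ((\<lambda>k. (x\<^sup>2 / 2) ^ k /\<^sub>R fact k) (n div 2)) else 0) sums (0 + exp (x\<^sup>2 / 2))"
    using sums_if[OF sums_zero exp_converges[of "x\<^sup>2 / 2"]] by simp
  then have exp_sums: "(\<lambda>n. if even n then (x\<^sup>2 / 2) ^ (n div 2) / fact (n div 2) else 0) sums exp (x\<^sup>2 / 2)"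
    by (simp only: divide_eq add_0_left)
  have cosh_sums: "(\<lambda>n. if even n then x ^ n / fact n else 0) sums cosh x"
    using cosh_converges[of x] by (simp only: divide_eq)
  show ?thesis
  proof (rule sums_le[OF _ cosh_sums exp_sums])
    fix n :: nat
    show "(if even n then x ^ n / fact n else 0) \<le> (if even n then (x\<^sup>2 / 2) ^ (n div 2) / fact (n div 2) else 0)"
    proof (cases "even n")
      case True
      then obtain k where n: "n = 2 * k" by blast
      have "(x\<^sup>2) ^ k / fact (2 * k) \<le> (x\<^sup>2) ^ k / (2 ^ k * fact k)"
        by (intro divide_left_mono two_pow_mult_fact_le_fact_double) auto
      then show ?thesis
        unfolding n by (simp add: power_mult power_divide)
    qed simp
  qed
qed

lemma one_plus_power_le_exp: "0 \<le> 1 + s \<Longrightarrow> (1 + s) ^ n \<le> exp (real n * s)"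
  using power_mono[of "1 + s" "exp s" n] by (simp add: add.commute exp_of_nat_mult)

lemma sum_sum_prod_PiE:
  fixes F :: "'i \<Rightarrow> 'b \<Rightarrow> 'b \<Rightarrow> 'c::comm_semiring_1"
  assumes "finite I" and "finite S"
  shows "(\<Sum>\<theta>\<in>Pi\<^sub>E I (\<lambda>_. S). \<Sum>\<theta>'\<in>Pi\<^sub>E I (\<lambda>_. S). \<Prod>i\<in>I. F i (\<theta> i) (\<theta>' i)) =
    (\<Prod>i\<in>I. \<Sum>s\<in>S. \<Sum>s'\<in>S. F i s s')"
proof -
  have "(\<Sum>\<theta>\<in>Pi\<^sub>E I (\<lambda>_. S). \<Sum>\<theta>'\<in>Pi\<^sub>E I (\<lambda>_. S). \<Prod>i\<in>I. F i (\<theta> i) (\<theta>' i)) =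
      (\<Sum>\<theta>\<in>Pi\<^sub>E I (\<lambda>_. S). \<Prod>i\<in>I. \<Sum>s'\<in>S. F i (\<theta> i) s')"
    by (intro sum.cong refl) (rule prod_sum_PiE[OF assms, symmetric])
  also have "\<dots> = (\<Prod>i\<in>I. \<Sum>s\<in>S. \<Sum>s'\<in>S. F i s s')"
    by (rule prod_sum_PiE[OF assms, symmetric])
  finally show ?thesis .
qed

lemma integral_pert_conv_mult_signs:
  assumes pos: "\<And>j. fc_norm \<phi> j > 0" and K: "min k k' \<le> K"
  shows "integral\<^sup>L M0 (\<lambda>y. pert_conv \<phi> \<theta> z k y * pert_conv \<phi> \<theta>' z' k' y) =
    1 + (\<Sum>i\<in>{1..K}. \<theta> i * \<theta>' i *
      (if i \<le> min k k' then 2 * z * z' / (fc_norm \<phi> (int i))\<^sup>2 else 0))"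
proof -
  have "(\<Sum>j\<in>freqs (min k k'). pert_coeff \<phi> \<theta> z j * pert_coeff \<phi> \<theta>' z' j * (fc_norm \<phi> j)\<^sup>2) =
      (\<Sum>j\<in>freqs (min k k'). \<theta> (nat \<bar>j\<bar>) * \<theta>' (nat \<bar>j\<bar>) * (z * z' / (fc_norm \<phi> j)\<^sup>2))"
    using pos by (intro sum.cong refl) (simp add: pert_coeff_def power2_eq_square field_simps)
  also have "\<dots> = (\<Sum>i\<in>{1..min k k'}. \<theta> i * \<theta>' i * (2 * z * z' / (fc_norm \<phi> (int i))\<^sup>2))"
    by (subst sum_freqs_even) (simp_all add: sum_distrib_left mult_ac)
  also have "\<dots> = (\<Sum>i\<in>{1..K}. \<theta> i * \<theta>' i *
      (if i \<le> min k k' then 2 * z * z' / (fc_norm \<phi> (int i))\<^sup>2 else 0))"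
    by (rule sum.mono_neutral_cong_left) (use K in auto)
  finally show ?thesis
    unfolding integral_pert_conv_mult by simp
qed

lemma chi_square_sign_mixture:
  assumes phi: "\<phi> \<in> Dens" and pos: "\<And>j. fc_norm \<phi> j > 0" and K: "k \<le> K" "k' \<le> K"
    and l1: "\<And>\<theta>. \<theta> \<in> Pi\<^sub>E {1..K} (\<lambda>_. {-1, 1}) \<Longrightarrow> (\<Sum>j\<in>freqs k. \<bar>pert_coeff \<phi> \<theta> z j\<bar>) \<le> 1"
      "\<And>\<theta>. \<theta> \<in> Pi\<^sub>E {1..K} (\<lambda>_. {-1, 1}) \<Longrightarrow> (\<Sum>j\<in>freqs k'. \<bar>pert_coeff \<phi> \<theta> z' j\<bar>) \<le> 1"
  shows "(\<Sum>\<theta>\<in>Pi\<^sub>E {1..K} (\<lambda>_. {-1, 1}). \<Sum>\<theta>'\<in>Pi\<^sub>E {1..K} (\<lambda>_. {-1, 1}).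
      (integral\<^sup>L M0 (\<lambda>y. pert_conv \<phi> \<theta> z k y * pert_conv \<phi> \<theta>' z' k' y)) ^ n)
    \<le> 4 ^ K * exp ((real n)\<^sup>2 * z\<^sup>2 * z'\<^sup>2 * nu4 \<phi> (min k k'))"
proof -
  define \<Theta> where "\<Theta> = Pi\<^sub>E {1..K} (\<lambda>_. {-1, 1::real})"
  define \<beta> where "\<beta> i = (if i \<le> min k k' then 2 * z * z' / (fc_norm \<phi> (int i))\<^sup>2 else 0)" for i
  have mkK: "min k k' \<le> K"
    using K by simp
  have power_le: "(integral\<^sup>L M0 (\<lambda>y. pert_conv \<phi> \<theta> z k y * pert_conv \<phi> \<theta>' z' k' y)) ^ n \<le>
      (\<Prod>i\<in>{1..K}. exp (real n * \<beta> i * \<theta> i * \<theta>' i))"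
    if "\<theta> \<in> \<Theta>" "\<theta>' \<in> \<Theta>" for \<theta> \<theta>'
  proof -
    have "0 \<le> integral\<^sup>L M0 (\<lambda>y. pert_conv \<phi> \<theta> z k y * pert_conv \<phi> \<theta>' z' k' y)"
      using pert_conv_bounds(1)[OF phi l1(1)] pert_conv_bounds(1)[OF phi l1(2)] that
      unfolding \<Theta>_def by (intro Bochner_Integration.integral_nonneg mult_nonneg_nonneg) auto
    moreover have "integral\<^sup>L M0 (\<lambda>y. pert_conv \<phi> \<theta> z k y * pert_conv \<phi> \<theta>' z' k' y) =
        1 + (\<Sum>i\<in>{1..K}. \<theta> i * \<theta>' i * \<beta> i)"
      unfolding \<beta>_def by (rule integral_pert_conv_mult_signs[OF pos mkK])
    ultimately have "(integral\<^sup>L M0 (\<lambda>y. pert_conv \<phi> \<theta> z k y * pert_conv \<phi> \<theta>' z' k' y)) ^ n \<le>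
        exp (real n * (\<Sum>i\<in>{1..K}. \<theta> i * \<theta>' i * \<beta> i))"
      using one_plus_power_le_exp[of "\<Sum>i\<in>{1..K}. \<theta> i * \<theta>' i * \<beta> i" n] by simp
    also have "\<dots> = (\<Prod>i\<in>{1..K}. exp (real n * \<beta> i * \<theta> i * \<theta>' i))"
      by (simp add: sum_distrib_left exp_sum mult_ac)
    finally show ?thesis .
  qed
  have "(\<Sum>\<theta>\<in>\<Theta>. \<Sum>\<theta>'\<in>\<Theta>. (integral\<^sup>L M0 (\<lambda>y. pert_conv \<phi> \<theta> z k y * pert_conv \<phi> \<theta>' z' k' y)) ^ n) \<le>
      (\<Sum>\<theta>\<in>\<Theta>. \<Sum>\<theta>'\<in>\<Theta>. \<Prod>i\<in>{1..K}. exp (real n * \<beta> i * \<theta> i * \<theta>' i))"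
    using power_le by (intro sum_mono) auto
  also have "\<dots> = (\<Prod>i\<in>{1..K}. \<Sum>s\<in>{-1,1}. \<Sum>s'\<in>{-1,1}. exp (real n * \<beta> i * s * s'))"
    unfolding \<Theta>_def by (rule sum_sum_prod_PiE) auto
  also have "\<dots> = (\<Prod>i\<in>{1..K}. 4 * cosh (real n * \<beta> i))"
    by (intro prod.cong refl) (simp add: cosh_def)
  also have "\<dots> \<le> (\<Prod>i\<in>{1..K}. 4 * exp ((real n * \<beta> i)\<^sup>2 / 2))"
    by (intro prod_mono conjI mult_left_mono cosh_le_exp_half_sq)
      (auto intro: order.trans[OF _ cosh_real_ge_1])
  also have "\<dots> = 4 ^ K * exp (\<Sum>i\<in>{1..K}. (real n * \<beta> i)\<^sup>2 / 2)"
    by (simp add: prod.distrib exp_sum)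
  also have "(\<Sum>i\<in>{1..K}. (real n * \<beta> i)\<^sup>2 / 2) = (real n)\<^sup>2 * z\<^sup>2 * z'\<^sup>2 * nu4 \<phi> (min k k')"
  proof -
    have "(\<Sum>i\<in>{1..K}. (real n * \<beta> i)\<^sup>2 / 2) = (\<Sum>i\<in>{1..min k k'}. (real n * \<beta> i)\<^sup>2 / 2)"
      by (rule sum.mono_neutral_right) (use mkK in \<open>auto simp: \<beta>_def\<close>)
    also have "\<dots> = (\<Sum>i\<in>{1..min k k'}. ((real n)\<^sup>2 * z\<^sup>2 * z'\<^sup>2) * (2 * (1 / fc_norm \<phi> (int i) ^ 4)))"
      using pos by (intro sum.cong refl) (simp add: \<beta>_def power_mult_distrib power_divide field_simps)
    also have "\<dots> = ((real n)\<^sup>2 * z\<^sup>2 * z'\<^sup>2) * (2 * (\<Sum>i\<in>{1..min k k'}. 1 / fc_norm \<phi> (int i) ^ 4))"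
      by (simp add: sum_distrib_left)
    also have "\<dots> = (real n)\<^sup>2 * z\<^sup>2 * z'\<^sup>2 * nu4 \<phi> (min k k')"
      by (simp add: nu4_eq_sum_pos)
    finally show ?thesis .
  qed
  finally show ?thesis
    unfolding \<Theta>_def .
qed

lemma double_sum_le_diag_offdiag:
  fixes E :: "'m \<Rightarrow> 'm \<Rightarrow> real"
  assumes M: "finite M" and e: "0 \<le> e"
    and diag: "\<And>m. m \<in> M \<Longrightarrow> E m m \<le> d"
    and offdiag: "\<And>m m'. m \<in> M \<Longrightarrow> m' \<in> M \<Longrightarrow> m \<noteq> m' \<Longrightarrow> E m m' \<le> e"
  shows "(\<Sum>m\<in>M. \<Sum>m'\<in>M. E m m') \<le> real (card M) * d + (real (card M))\<^sup>2 * e"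
proof -
  have "(\<Sum>m\<in>M. \<Sum>m'\<in>M. E m m') \<le> (\<Sum>m\<in>M. \<Sum>m'\<in>M. (if m = m' then d else 0) + e)"
    using diag offdiag e by (intro sum_mono) (fastforce simp: add_increasing2)
  also have "\<dots> = (\<Sum>m\<in>M. d + real (card M) * e)"
    using M by (intro sum.cong refl) (simp add: sum.distrib)
  also have "\<dots> = real (card M) * d + (real (card M))\<^sup>2 * e"
    by (simp add: power2_eq_square algebra_simps)
  finally show ?thesis .
qed

text \<open>The locale keeps only the hypotheses of the theorem that the argument uses.\<close>

locale minimax_lower_bound_setting =
  fixes \<phi> :: "real \<Rightarrow> real" and R \<alpha> \<delta> c L \<eta> A :: real and n N :: nat
    and AA :: "(nat \<Rightarrow> real) set" and aa :: "nat \<Rightarrow> nat \<Rightarrow> real"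
  assumes phi_dens: "\<phi> \<in> Dens"
    and fc_norm_pos: "\<And>j. fc_norm \<phi> j > 0"
    and n: "1 \<le> n"
    and alpha: "0 < \<alpha>"
    and delta: "0 < \<delta>"
    and AA: "\<forall>a\<in>AA. \<forall>j\<ge>1. 0 < a j \<and> a (Suc j) \<le> a j"
    and aa: "\<forall>m\<in>{1..N}. aa m \<in> AA"
    and C1: "\<forall>m\<in>{1..N}. \<forall>l\<in>{1..N}. m < l \<longrightarrow>
      kk \<phi> (aa m) (\<delta> * real n) \<le> kk \<phi> (aa l) (\<delta> * real n) \<and>
      rho \<phi> (aa m) (\<delta> * real n) \<le> \<delta> * rho \<phi> (aa l) (\<delta> * real n)"
    and C2: "c > 0" "exp (c * \<delta> powr (-2)) \<le> real N * \<alpha>\<^sup>2"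
    and C3: "L > 0" "\<forall>m\<in>{1..N}. \<exists>s. ((\<lambda>j. (aa m j)\<^sup>2) has_sum s) {1..} \<and> 2 * s \<le> L"
    and C4: "0 < \<eta>"
      "\<forall>m\<in>{1..N}. \<eta> \<le>
        min ((aa m (kk \<phi> (aa m) (\<delta> * real n)))\<^sup>2) ((nu \<phi> (kk \<phi> (aa m) (\<delta> * real n)))\<^sup>2 / (\<delta> * real n))
      / max ((aa m (kk \<phi> (aa m) (\<delta> * real n)))\<^sup>2) ((nu \<phi> (kk \<phi> (aa m) (\<delta> * real n)))\<^sup>2 / (\<delta> * real n))"
    and A: "0 \<le> A" "A \<le> sqrt (\<eta> * min (R\<^sup>2) (min (sqrt (ln (1 + \<alpha>\<^sup>2))) (min (1 / L) (sqrt c))))"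
begin

definition k :: "nat \<Rightarrow> nat" where
  "k m = kk \<phi> (aa m) (\<delta> * real n)"

definition \<rho> :: "nat \<Rightarrow> real" where
  "\<rho> m = rho \<phi> (aa m) (\<delta> * real n)"

definition \<kappa> :: real where
  "\<kappa> = min (R\<^sup>2) (min (sqrt (ln (1 + \<alpha>\<^sup>2))) (min (1 / L) (sqrt c)))"

definition \<zeta> :: "nat \<Rightarrow> real" where
  "\<zeta> m = A * \<rho> m / sqrt (nu4 \<phi> (k m))"

definition K :: nat where
  "K = Max (k ` {1..N})"

definition \<Theta> :: "(nat \<Rightarrow> real) set" where
  "\<Theta> = Pi\<^sub>E {1..K} (\<lambda>_. {-1, 1})"

definition alt :: "nat \<times> (nat \<Rightarrow> real) \<Rightarrow> real \<Rightarrow> real" where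
  "alt q = pert_dens \<phi> (snd q) (\<zeta> (fst q)) (k (fst q))"

definition chi_exponent :: "nat \<Rightarrow> nat \<Rightarrow> real" where
  "chi_exponent m m' = (real n)\<^sup>2 * (\<zeta> m)\<^sup>2 * (\<zeta> m')\<^sup>2 * nu4 \<phi> (min (k m) (k m'))"

lemma sample_size_pos: "0 < \<delta> * real n"
  using delta n by simp

lemma k_ge_1: "1 \<le> k m"
  and rho_sq: "max ((aa m (k m))\<^sup>2) ((nu \<phi> (k m))\<^sup>2 / (\<delta> * real n)) = (\<rho> m)\<^sup>2"
  and rho_nonneg: "0 \<le> \<rho> m"
  unfolding k_def \<rho>_def by (rule rho_attained_at_kk[OF phi_dens fc_norm_pos sample_size_pos])+

lemma nu4_k_pos: "0 < nu4 \<phi> (k m)"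
  using nu4_ge[OF phi_dens fc_norm_pos, of "k m"] k_ge_1[of m] by simp

lemma kappa_nonneg: "0 \<le> \<kappa>"
  using alpha C2(1) C3(1) unfolding \<kappa>_def by auto

lemma A_sq_le: "A\<^sup>2 \<le> \<eta> * \<kappa>"
proof -
  have "A\<^sup>2 \<le> (sqrt (\<eta> * \<kappa>))\<^sup>2"
    using A unfolding \<kappa>_def by (intro power_mono) auto
  then show ?thesis
    using C4(1) kappa_nonneg by simp
qed

lemma signal_le:
  assumes m: "m \<in> {1..N}"
  shows "A\<^sup>2 * (\<rho> m)\<^sup>2 \<le> \<kappa> * (aa m (k m))\<^sup>2"
    "A\<^sup>2 * (\<rho> m)\<^sup>2 \<le> \<kappa> * (sqrt (nu4 \<phi> (k m)) / (\<delta> * real n))"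
proof -
  let ?min = "min ((aa m (k m))\<^sup>2) (sqrt (nu4 \<phi> (k m)) / (\<delta> * real n))"
  have "0 < sqrt (nu4 \<phi> (k m)) / (\<delta> * real n)"
    using nu4_k_pos sample_size_pos by simp
  then have rho_pos: "0 < (\<rho> m)\<^sup>2"
    unfolding rho_sq[symmetric] nu_sq[OF fc_norm_pos] by (simp add: less_max_iff_disj)
  have "\<eta> \<le> ?min / (\<rho> m)\<^sup>2"
    using C4(2) m unfolding k_def[symmetric] rho_sq[unfolded nu_sq[OF fc_norm_pos]] nu_sq[OF fc_norm_pos] by auto
  then have "\<eta> * (\<rho> m)\<^sup>2 \<le> ?min"
    using rho_pos by (simp add: le_divide_eq)
  have "A\<^sup>2 * (\<rho> m)\<^sup>2 \<le> (\<eta> * \<kappa>) * (\<rho> m)\<^sup>2"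
    using A_sq_le by (intro mult_right_mono) auto
  also have "\<dots> = \<kappa> * (\<eta> * (\<rho> m)\<^sup>2)"
    by simp
  also have "\<dots> \<le> \<kappa> * ?min"
    using \<open>\<eta> * (\<rho> m)\<^sup>2 \<le> ?min\<close> kappa_nonneg by (intro mult_left_mono) auto
  finally have "A\<^sup>2 * (\<rho> m)\<^sup>2 \<le> \<kappa> * ?min" .
  then show "A\<^sup>2 * (\<rho> m)\<^sup>2 \<le> \<kappa> * (aa m (k m))\<^sup>2"
    "A\<^sup>2 * (\<rho> m)\<^sup>2 \<le> \<kappa> * (sqrt (nu4 \<phi> (k m)) / (\<delta> * real n))"
    by (rule order.trans[OF _ mult_left_mono[OF min.cobounded1 kappa_nonneg]]
        order.trans[OF _ mult_left_mono[OF min.cobounded2 kappa_nonneg]])+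
qed

lemma zeta_sq_mult_nu4: "(\<zeta> m)\<^sup>2 * nu4 \<phi> (k m) = A\<^sup>2 * (\<rho> m)\<^sup>2"
  unfolding \<zeta>_def using nu4_k_pos[of m] by (simp add: power_divide power_mult_distrib)

lemma signs_\<Theta>:
  assumes "m \<in> {1..N}" and "\<theta> \<in> \<Theta>"
  shows "\<forall>i\<in>{1..k m}. \<theta> i \<in> {-1, 1}"
proof -
  have "k m \<le> K"
    unfolding K_def using assms(1) by (intro Max_ge) auto
  then show ?thesis
    using assms(2) unfolding \<Theta>_def by auto
qed

lemma aa_decreasing: "m \<in> {1..N} \<Longrightarrow> \<forall>j\<ge>1. 0 < aa m j \<and> aa m (Suc j) \<le> aa m j"
  using AA aa by blast

lemma alt_sum_abs_coeff_le_1: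
  assumes m: "m \<in> {1..N}" and \<theta>: "\<theta> \<in> \<Theta>"
  shows "(\<Sum>j\<in>freqs (k m). \<bar>pert_coeff \<phi> \<theta> (\<zeta> m) j\<bar>) \<le> 1"
proof -
  obtain s where s: "((\<lambda>j. (aa m j)\<^sup>2) has_sum s) {1..}" "2 * s \<le> L"
    using C3(2) m by blast
  have "(\<Sum>j\<in>freqs (k m). \<bar>pert_coeff \<phi> \<theta> (\<zeta> m) j\<bar>)\<^sup>2 \<le> 2 * real (k m) * (A\<^sup>2 * (\<rho> m)\<^sup>2)"
    using sum_abs_pert_coeff_sq_le[OF signs_\<Theta>[OF m \<theta>], of \<phi> "\<zeta> m"] unfolding zeta_sq_mult_nu4 .
  also have "\<dots> \<le> 2 * real (k m) * (\<kappa> * (aa m (k m))\<^sup>2)"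
    using signal_le(1)[OF m] by (intro mult_left_mono) auto
  also have "\<dots> \<le> 2 * real (k m) * (1 / L * (aa m (k m))\<^sup>2)"
    unfolding \<kappa>_def by (intro mult_left_mono mult_right_mono) auto
  also have "\<dots> = 2 * (real (k m) * (aa m (k m))\<^sup>2) / L"
    by simp
  also have "\<dots> \<le> 1"
    using mult_sq_le_has_sum[OF aa_decreasing[OF m] s(1), of "k m"] s(2) C3(1) by simp
  finally show ?thesis
    by (simp add: power_le_one_iff abs_le_square_iff)
qed

lemma alt_in_Dens: "m \<in> {1..N} \<Longrightarrow> \<theta> \<in> \<Theta> \<Longrightarrow> alt (m, \<theta>) \<in> Dens"
  unfolding alt_def by (simp add: pert_dens_in_Dens alt_sum_abs_coeff_le_1)

lemma alt_in_ellipsoid: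
  assumes m: "m \<in> {1..N}" and \<theta>: "\<theta> \<in> \<Theta>"
  shows "(\<lambda>x. complex_of_real (alt (m, \<theta>) x - fcirc x)) \<in> ellipsoid (aa m) R"
  unfolding alt_def fst_conv snd_conv
proof (rule pert_diff_in_ellipsoid)
  have a: "0 < aa m (k m)" "\<And>i. 1 \<le> i \<Longrightarrow> i \<le> k m \<Longrightarrow> aa m (k m) \<le> aa m i"
    using aa_decreasing[OF m] k_ge_1[of m] antimono_from_1_le[of "aa m"] by auto
  then show "\<And>i. 1 \<le> i \<Longrightarrow> i \<le> k m \<Longrightarrow> aa m i \<noteq> 0"
    by fastforce
  have "2 * (\<Sum>i\<in>{1..k m}. inverse ((aa m i)\<^sup>2) * (pert_coeff \<phi> \<theta> (\<zeta> m) (int i))\<^sup>2) \<le>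
      inverse ((aa m (k m))\<^sup>2) * (A\<^sup>2 * (\<rho> m)\<^sup>2)"
    using ellipsoid_sum_pert_coeff_le[where a = "aa m" and \<phi> = \<phi> and z = "\<zeta> m", OF signs_\<Theta>[OF m \<theta>] a]
    unfolding zeta_sq_mult_nu4 .
  also have "\<dots> \<le> inverse ((aa m (k m))\<^sup>2) * (\<kappa> * (aa m (k m))\<^sup>2)"
    using signal_le(1)[OF m] by (intro mult_left_mono) auto
  also have "\<dots> = \<kappa>"
    using a(1) by simp
  also have "\<dots> \<le> R\<^sup>2"
    unfolding \<kappa>_def by simp
  finally show "2 * (\<Sum>i\<in>{1..k m}. inverse ((aa m i)\<^sup>2) * (pert_coeff \<phi> \<theta> (\<zeta> m) (int i))\<^sup>2) \<le> R\<^sup>2" .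
qed

lemma l2norm_alt:
  assumes "m \<in> {1..N}" and "\<theta> \<in> \<Theta>"
  shows "l2norm (\<lambda>x. complex_of_real (alt (m, \<theta>) x - fcirc x)) = A * \<rho> m"
  unfolding alt_def fst_conv snd_conv l2norm_pert_diff sum_sq_pert_coeff[OF signs_\<Theta>[OF assms]]
    zeta_sq_mult_nu4
  using A(1) rho_nonneg by (simp add: real_sqrt_mult)

lemma chi_exponent_commute: "chi_exponent m m' = chi_exponent m' m"
  unfolding chi_exponent_def by (simp add: min.commute mult_ac)

lemma chi_exponent_le:
  assumes m': "m' \<in> {1..N}" and k: "k m \<le> k m'" and d: "0 \<le> d" "\<rho> m \<le> d * \<rho> m'"
  shows "chi_exponent m m' \<le> d\<^sup>2 * \<kappa>\<^sup>2 / \<delta>\<^sup>2"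
proof -
  define u where "u m = A\<^sup>2 * (\<rho> m)\<^sup>2" for m
  have u_nonneg: "0 \<le> u m" for m
    unfolding u_def by simp
  have "(\<rho> m)\<^sup>2 \<le> (d * \<rho> m')\<^sup>2"
    using d rho_nonneg[of m] by (intro power_mono) auto
  then have u_le: "u m \<le> d\<^sup>2 * u m'"
    unfolding u_def by (simp add: mult_left_mono power_mult_distrib mult.left_commute)
  have "(u m')\<^sup>2 \<le> (\<kappa> * (sqrt (nu4 \<phi> (k m')) / (\<delta> * real n)))\<^sup>2"
    using signal_le(2)[OF m'] u_nonneg[of m'] unfolding u_def by (intro power_mono) auto
  also have "\<dots> = \<kappa>\<^sup>2 * nu4 \<phi> (k m') / (\<delta> * real n)\<^sup>2"
    using nu4_k_pos[of m'] by (simp add: power_mult_distrib power_divide)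
  finally have u'_sq: "(u m')\<^sup>2 \<le> \<kappa>\<^sup>2 * nu4 \<phi> (k m') / (\<delta> * real n)\<^sup>2" .
  have "(\<zeta> m')\<^sup>2 = u m' / nu4 \<phi> (k m')"
    using zeta_sq_mult_nu4[of m'] nu4_k_pos[of m'] unfolding u_def by (simp add: eq_divide_eq)
  then have "chi_exponent m m' = (real n)\<^sup>2 * u m * u m' / nu4 \<phi> (k m')"
    unfolding chi_exponent_def using k zeta_sq_mult_nu4[of m] by (simp add: min_absorb1 u_def)
  also have "\<dots> \<le> (real n)\<^sup>2 * (d\<^sup>2 * u m') * u m' / nu4 \<phi> (k m')"
    using u_le u_nonneg[of m'] nu4_k_pos[of m']
    by (intro divide_right_mono mult_right_mono mult_left_mono) auto
  also have "\<dots> = (real n)\<^sup>2 * d\<^sup>2 * (u m')\<^sup>2 / nu4 \<phi> (k m')"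
    by (simp add: power2_eq_square)
  also have "\<dots> \<le> (real n)\<^sup>2 * d\<^sup>2 * (\<kappa>\<^sup>2 * nu4 \<phi> (k m') / (\<delta> * real n)\<^sup>2) / nu4 \<phi> (k m')"
    using u'_sq nu4_k_pos[of m'] by (intro divide_right_mono mult_left_mono) auto
  also have "\<dots> = d\<^sup>2 * \<kappa>\<^sup>2 / \<delta>\<^sup>2"
    using nu4_k_pos[of m'] n delta by (simp add: power_mult_distrib)
  finally show ?thesis .
qed

lemma kappa_sq_le: "\<kappa>\<^sup>2 \<le> c" "\<kappa>\<^sup>2 \<le> ln (1 + \<alpha>\<^sup>2)"
proof -
  have "0 \<le> ln (1 + \<alpha>\<^sup>2)"
    by (intro ln_ge_zero) simp
  moreover have "\<kappa> \<le> sqrt c" "\<kappa> \<le> sqrt (ln (1 + \<alpha>\<^sup>2))"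
    unfolding \<kappa>_def by auto
  ultimately show "\<kappa>\<^sup>2 \<le> c" "\<kappa>\<^sup>2 \<le> ln (1 + \<alpha>\<^sup>2)"
    using C2(1) kappa_nonneg by (metis less_imp_le power_mono real_sqrt_pow2)+
qed

lemma exp_chi_exponent_diag:
  assumes "m \<in> {1..N}"
  shows "exp (chi_exponent m m) \<le> real N * \<alpha>\<^sup>2"
proof -
  have "chi_exponent m m \<le> 1\<^sup>2 * \<kappa>\<^sup>2 / \<delta>\<^sup>2"
    using assms by (intro chi_exponent_le) auto
  also have "\<dots> \<le> c * \<delta> powr (-2)"
    using kappa_sq_le(1) delta by (simp add: powr_minus powr_realpow divide_inverse mult_right_mono)
  finally show ?thesis
    using C2(2) by (meson exp_le_cancel_iff order.trans)
qed

lemma exp_chi_exponent_offdiag: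
  assumes "m \<in> {1..N}" "m' \<in> {1..N}" "m \<noteq> m'"
  shows "exp (chi_exponent m m') \<le> 1 + \<alpha>\<^sup>2"
proof -
  have less: "exp (chi_exponent l l') \<le> 1 + \<alpha>\<^sup>2" if "l \<in> {1..N}" "l' \<in> {1..N}" "l < l'" for l l'
  proof -
    have "k l \<le> k l'" "\<rho> l \<le> \<delta> * \<rho> l'"
      using C1 that unfolding k_def \<rho>_def by auto
    then have "chi_exponent l l' \<le> \<delta>\<^sup>2 * \<kappa>\<^sup>2 / \<delta>\<^sup>2"
      using that delta by (intro chi_exponent_le) auto
    also have "\<dots> \<le> ln (1 + \<alpha>\<^sup>2)"
      using kappa_sq_le(2) delta by simp
    finally show ?thesis
      by (metis add_pos_nonneg exp_le_cancel_iff exp_ln zero_le_power2 zero_less_one order.trans)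
  qed
  show ?thesis
    using assms less[of m m'] less[of m' m] chi_exponent_commute[of m m'] by (cases "m < m'") auto
qed

lemma N_pos: "0 < N"
  using C2(2) by (cases N) (auto simp: not_le[symmetric])

lemma finite_\<Theta>: "finite \<Theta>"
  unfolding \<Theta>_def by (intro finite_PiE) auto

lemma card_\<Theta>: "card \<Theta> = 2 ^ K"
  unfolding \<Theta>_def by (simp add: card_PiE numeral_2_eq_2)

lemma chi_square_bound:
  "(\<Sum>q\<in>{1..N} \<times> \<Theta>. \<Sum>q'\<in>{1..N} \<times> \<Theta>. (\<integral>y. cconv (alt q) \<phi> y * cconv (alt q') \<phi> y \<partial>M0) ^ n)
    \<le> (1 + 2 * \<alpha>\<^sup>2) * (real (card ({1..N} \<times> \<Theta>)))\<^sup>2"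
proof -
  let ?F = "\<lambda>m \<theta> m' \<theta>'. (\<integral>y. pert_conv \<phi> \<theta> (\<zeta> m) (k m) y * pert_conv \<phi> \<theta>' (\<zeta> m') (k m') y \<partial>M0) ^ n"
  have k_le_K: "k m \<le> K" if "m \<in> {1..N}" for m
    unfolding K_def using that by (intro Max_ge) auto
  have split: "(\<Sum>q\<in>{1..N} \<times> \<Theta>. h q) = (\<Sum>m\<in>{1..N}. \<Sum>\<theta>\<in>\<Theta>. h (m, \<theta>))"
    for h :: "nat \<times> (nat \<Rightarrow> real) \<Rightarrow> real"
    by (simp add: sum.cartesian_product)
  have "(\<Sum>q\<in>{1..N} \<times> \<Theta>. \<Sum>q'\<in>{1..N} \<times> \<Theta>. (\<integral>y. cconv (alt q) \<phi> y * cconv (alt q') \<phi> y \<partial>M0) ^ n) =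
      (\<Sum>m\<in>{1..N}. \<Sum>\<theta>\<in>\<Theta>. \<Sum>m'\<in>{1..N}. \<Sum>\<theta>'\<in>\<Theta>. ?F m \<theta> m' \<theta>')"
    unfolding split alt_def cconv_pert_dens[OF phi_dens] by simp
  also have "\<dots> = (\<Sum>m\<in>{1..N}. \<Sum>m'\<in>{1..N}. \<Sum>\<theta>\<in>\<Theta>. \<Sum>\<theta>'\<in>\<Theta>. ?F m \<theta> m' \<theta>')"
    by (intro sum.cong refl) (rule sum.swap)
  also have "\<dots> \<le> (\<Sum>m\<in>{1..N}. \<Sum>m'\<in>{1..N}. 4 ^ K * exp (chi_exponent m m'))"
    unfolding chi_exponent_def \<Theta>_def
    by (intro sum_mono chi_square_sign_mixture[OF phi_dens fc_norm_pos] k_le_K)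
      (auto intro!: alt_sum_abs_coeff_le_1 simp: \<Theta>_def)
  also have "\<dots> = 4 ^ K * (\<Sum>m\<in>{1..N}. \<Sum>m'\<in>{1..N}. exp (chi_exponent m m'))"
    by (simp add: sum_distrib_left)
  also have "\<dots> \<le> 4 ^ K * (real N * (real N * \<alpha>\<^sup>2) + (real N)\<^sup>2 * (1 + \<alpha>\<^sup>2))"
    using double_sum_le_diag_offdiag[of "{1..N}" "1 + \<alpha>\<^sup>2" "\<lambda>m m'. exp (chi_exponent m m')"]
      exp_chi_exponent_diag exp_chi_exponent_offdiag
    by (intro mult_left_mono) auto
  also have "\<dots> = (1 + 2 * \<alpha>\<^sup>2) * (real (card ({1..N} \<times> \<Theta>)))\<^sup>2"
    unfolding card_cartesian_product card_\<Theta>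
    by (simp add: power2_eq_square power_mult_distrib[symmetric] algebra_simps)
  finally show ?thesis .
qed

lemma minimax_lower_bound:
  "1 - \<alpha> \<le> (INF \<Delta>\<in>tests n. SUP a\<in>AA. risk \<phi> n \<Delta> (ellipsoid a R) (A * rho \<phi> a (\<delta> * real n)))"
proof (rule minimax_risk_ge_of_chi_square[OF phi_dens _ _ alpha, where F = alt and a = "aa \<circ> fst" and C = 2])
  show "finite ({1..N} \<times> \<Theta>)" "{1..N} \<times> \<Theta> \<noteq> {}"
    using N_pos finite_\<Theta> card_\<Theta> by (auto simp: card_eq_0_iff[symmetric])
  show "alt q \<in> Dens \<and> (aa \<circ> fst) q \<in> AA \<and>
      (\<lambda>x. complex_of_real (alt q x - fcirc x)) \<in> ellipsoid ((aa \<circ> fst) q) R \<and>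
      A * rho \<phi> ((aa \<circ> fst) q) (\<delta> * real n) \<le> l2norm (\<lambda>x. complex_of_real (alt q x - fcirc x))"
    if "q \<in> {1..N} \<times> \<Theta>" for q
    using that aa alt_in_Dens alt_in_ellipsoid l2norm_alt by (auto simp: \<rho>_def)
  show "cconv (alt q) \<phi> y \<le> 2" "integral\<^sup>L M0 (cconv (alt q) \<phi>) = 1" if "q \<in> {1..N} \<times> \<Theta>" for q y
    using that pert_conv_bounds(2)[OF phi_dens alt_sum_abs_coeff_le_1] integral_pert_conv
    by (auto simp: alt_def cconv_pert_dens[OF phi_dens])
qed (rule chi_square_bound)

end

theorem proposition6p1:
  fixes \<phi> :: "real \<Rightarrow> real" and R \<alpha> \<delta> c L \<eta> A :: real and n N :: nat
    and AA :: "(nat \<Rightarrow> real) set" and aa :: "nat \<Rightarrow> nat \<Rightarrow> real"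
  assumes phi_dens: "\<phi> \<in> Dens"
    and phi_fc: "\<forall>j. cmod (fc (\<lambda>x. complex_of_real (\<phi> x)) j) > 0"
    and R: "R > 0"
    and n: "n \<ge> 1"
    and alpha: "0 < \<alpha>" "\<alpha> < 1"
    and delta: "0 < \<delta>" "\<delta> \<le> 1"
    and AA: "\<forall>a\<in>AA. (\<forall>j\<ge>1. 0 < a j \<and> a j \<le> 1 \<and> a (Suc j) \<le> a j)"
    and aa: "\<forall>m\<in>{1..N}. aa m \<in> AA"
    and C1: "\<forall>m\<in>{1..N}. \<forall>l\<in>{1..N}. m < l \<longrightarrow>
               kk \<phi> (aa m) (\<delta> * real n) \<le> kk \<phi> (aa l) (\<delta> * real n) \<and>
               rho \<phi> (aa m) (\<delta> * real n) \<le> \<delta> * rho \<phi> (aa l) (\<delta> * real n)"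
    and C2: "c > 0" "exp (c * \<delta> powr (-2)) \<le> real N * \<alpha>\<^sup>2"
    and C3: "L > 0"
      "\<forall>m\<in>{1..N}. \<exists>s. ((\<lambda>j. (aa m j)\<^sup>2) has_sum s) {1..} \<and> 2 * s \<le> L"
    and C4: "0 < \<eta>" "\<eta> \<le> 1"
      "\<forall>m\<in>{1..N}. \<eta> \<le>
         min ((aa m (kk \<phi> (aa m) (\<delta> * real n)))\<^sup>2)
             ((nu \<phi> (kk \<phi> (aa m) (\<delta> * real n)))\<^sup>2 / (\<delta> * real n))
       / max ((aa m (kk \<phi> (aa m) (\<delta> * real n)))\<^sup>2)
             ((nu \<phi> (kk \<phi> (aa m) (\<delta> * real n)))\<^sup>2 / (\<delta> * real n))"
    and A: "0 \<le> A"
      "A \<le> sqrt (\<eta> * min (R\<^sup>2) (min (sqrt (ln (1 + \<alpha>\<^sup>2))) (min (1 / L) (sqrt c))))"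
  shows "(INF \<Delta>\<in>tests n. SUP a\<in>AA. risk \<phi> n \<Delta> (ellipsoid a R) (A * rho \<phi> a (\<delta> * real n)))
           \<ge> 1 - \<alpha>"
proof -
  interpret minimax_lower_bound_setting \<phi> R \<alpha> \<delta> c L \<eta> A n N AA aa
    using assms by unfold_locales (auto simp: fc_norm_def)
  show ?thesis
    using minimax_lower_bound by simp
qed

end
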